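(* Assume $\mathbb{C}_v$ has residue characteristic $0$, fix $c\in\mathbb{C}_v$ with $0<|c|<1$, and let $f(z)=(z+c)(z+1)/z$. Then there exists a type I point $b\in\mathcal{J}_f\cap\mathbb{C}_v$ such that $(f^n)^{\natural}(b)\le|c|^{-1}n$ for every $n\in\mathbb{N}$.
   Context: $\mathbb{C}_v$ is an algebraically closed field of characteristic zero, complete with respect to a nontrivial non-archimedean absolute value. $\mathbb{P}^1_{\mathrm{Berk}}$ is its Berkovich projective line. $\mathcal{J}_f$ is the Berkovich Julia set (complement of the set of points having a neighborhood $V$ with $\bigcup_{n\ge1}f^n(V)$ omitting infinitely many points). $f^{\natural}$ is the spherical derivative; at $x\in\mathbb{C}_v$ with $f(x)\in\mathbb{C}_v$ it equals $|f'(x)|\max\{1,|x|^2\}/\max\{1,|f(x)|^2\}$, and in general $f^{\natural}(\zeta)=\lim_{\zeta'\to\zeta}\|f(\zeta),f(\zeta')\|/\|\zeta,\zeta'\|$ with $\|\cdot,\cdot\|$ the spherical kernel extending the chordal metric $\rho(z,w)=|z-w|/(\max\{1,|z|\}\max\{1,|w|\})$. *)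

theory Defs
  imports "HOL-Analysis.Analysis" "HOL-Computational_Algebra.Polynomial"
begin

definition nonarch_abs :: "('a::field \<Rightarrow> real) \<Rightarrow> bool" where
  "nonarch_abs absv \<longleftrightarrow>
     (\<forall>x. 0 \<le> absv x) \<and> (\<forall>x. absv x = 0 \<longleftrightarrow> x = 0) \<and>
     (\<forall>x y. absv (x * y) = absv x * absv y) \<and>
     (\<forall>x y. absv (x + y) \<le> max (absv x) (absv y))"

definition nontrivial_abs :: "('a::field \<Rightarrow> real) \<Rightarrow> bool" where
  "nontrivial_abs absv \<longleftrightarrow> (\<exists>x. absv x \<noteq> 0 \<and> absv x \<noteq> 1)"

definition complete_abs :: "('a::field \<Rightarrow> real) \<Rightarrow> bool" where
  "complete_abs absv \<longleftrightarrow>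
     (\<forall>X :: nat \<Rightarrow> 'a.
        (\<forall>e>0. \<exists>N. \<forall>m\<ge>N. \<forall>n\<ge>N. absv (X m - X n) < e) \<longrightarrow>
        (\<exists>L. \<forall>e>0. \<exists>N. \<forall>n\<ge>N. absv (X n - L) < e))"

definition alg_closed :: "'a::field itself \<Rightarrow> bool" where
  "alg_closed _ \<longleftrightarrow> (\<forall>p :: 'a poly. 0 < degree p \<longrightarrow> (\<exists>x. poly p x = 0))"

text \<open>Residue field O/m (O = {|x| \<le> 1}, m = {|x| < 1}) has characteristic 0:
  no positive integer multiple of 1 lies in m.\<close>
definition residue_char_zero :: "('a::field \<Rightarrow> real) \<Rightarrow> bool" where
  "residue_char_zero absv \<longleftrightarrow> (\<forall>n::nat. 0 < n \<longrightarrow> \<not> absv (of_nat n) < 1)"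

definition Cv_field :: "('a::field_char_0 \<Rightarrow> real) \<Rightarrow> bool" where
  "Cv_field absv \<longleftrightarrow> nonarch_abs absv \<and> nontrivial_abs absv \<and> complete_abs absv
      \<and> alg_closed TYPE('a)"

text \<open>Points of the Berkovich affine line: multiplicative seminorms on C_v[T]
  extending the absolute value of C_v.\<close>
definition berk_seminorm :: "('a::field \<Rightarrow> real) \<Rightarrow> ('a poly \<Rightarrow> real) \<Rightarrow> bool" where
  "berk_seminorm absv \<zeta> \<longleftrightarrow>
     (\<forall>a. \<zeta> [:a:] = absv a) \<and> (\<forall>p. 0 \<le> \<zeta> p) \<and>
     (\<forall>p q. \<zeta> (p * q) = \<zeta> p * \<zeta> q) \<and>
     (\<forall>p q. \<zeta> (p + q) \<le> max (\<zeta> p) (\<zeta> q))"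

definition berkA1 :: "('a::field \<Rightarrow> real) \<Rightarrow> ('a poly \<Rightarrow> real) set" where
  "berkA1 absv = {\<zeta>. berk_seminorm absv \<zeta>}"

definition berkA1_top :: "('a::field \<Rightarrow> real) \<Rightarrow> ('a poly \<Rightarrow> real) topology" where
  "berkA1_top absv = topology_generated_by
      {{\<zeta> \<in> berkA1 absv. \<zeta> g \<in> U} | g U. open (U :: real set)}"

text \<open>Berkovich projective line = one-point compactification of the affine line;
  None is the point at infinity.\<close>
definition berkP1 :: "('a::field \<Rightarrow> real) \<Rightarrow> ('a poly \<Rightarrow> real) option set" where
  "berkP1 absv = insert None (Some ` berkA1 absv)"

definition berkP1_open :: "('a::field \<Rightarrow> real) \<Rightarrow> ('a poly \<Rightarrow> real) option set \<Rightarrow> bool" where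
  "berkP1_open absv U \<longleftrightarrow> U \<subseteq> berkP1 absv \<and>
     openin (berkA1_top absv) (Some -` U) \<and>
     (None \<in> U \<longrightarrow> compactin (berkA1_top absv) (berkA1 absv - Some -` U))"

definition typeI :: "('a::field \<Rightarrow> real) \<Rightarrow> 'a \<Rightarrow> ('a poly \<Rightarrow> real)" where
  "typeI absv a = (\<lambda>g. absv (poly g a))"

section \<open>Action of a rational map phi = P/Q (P, Q coprime, Q nonzero)\<close>

text \<open>Numerator of g(P/Q): Q^(deg g) * g(P/Q).\<close>
definition hom_compose :: "'a::field poly \<Rightarrow> 'a poly \<Rightarrow> 'a poly \<Rightarrow> 'a poly" where
  "hom_compose g P Q = (\<Sum>i\<le>degree g. smult (coeff g i) (P ^ i * Q ^ (degree g - i)))"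

definition rat_at_infty :: "'a::field poly \<Rightarrow> 'a poly \<Rightarrow> 'a" where
  "rat_at_infty P Q = (if degree P = degree Q then lead_coeff P / lead_coeff Q else 0)"

text \<open>[g]_{phi(zeta)} = [g o phi]_zeta.\<close>
definition berk_map :: "('a::field \<Rightarrow> real) \<Rightarrow> 'a poly \<Rightarrow> 'a poly
                        \<Rightarrow> ('a poly \<Rightarrow> real) option \<Rightarrow> ('a poly \<Rightarrow> real) option" where
  "berk_map absv P Q z = (case z of
      None \<Rightarrow> (if degree P > degree Q then None
               else Some (typeI absv (rat_at_infty P Q)))
    | Some \<zeta> \<Rightarrow> (if \<zeta> Q = 0 then None
               else Some (\<lambda>g. \<zeta> (hom_compose g P Q) / \<zeta> Q ^ degree g)))"

definition berk_julia :: "('a::field \<Rightarrow> real) \<Rightarrow> 'a poly \<Rightarrow> 'a poly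
                          \<Rightarrow> ('a poly \<Rightarrow> real) option set" where
  "berk_julia absv P Q = berkP1 absv -
     {x \<in> berkP1 absv. \<exists>V. berkP1_open absv V \<and> x \<in> V \<and>
        infinite (berkP1 absv - (\<Union>n\<in>{1..}. (berk_map absv P Q ^^ n) ` V))}"

section \<open>Classical projective line P^1(C_v) (None = infinity), chordal metric,
  spherical derivative\<close>

definition rat_map :: "'a::field poly \<Rightarrow> 'a poly \<Rightarrow> 'a option \<Rightarrow> 'a option" where
  "rat_map P Q z = (case z of
      None \<Rightarrow> (if degree P > degree Q then None else Some (rat_at_infty P Q))
    | Some x \<Rightarrow> (if poly Q x = 0 then None else Some (poly P x / poly Q x)))"

definition chordal :: "('a::field \<Rightarrow> real) \<Rightarrow> 'a option \<Rightarrow> 'a option \<Rightarrow> real" where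
  "chordal absv z w = (case (z, w) of
      (None, None) \<Rightarrow> 0
    | (None, Some y) \<Rightarrow> 1 / max 1 (absv y)
    | (Some x, None) \<Rightarrow> 1 / max 1 (absv x)
    | (Some x, Some y) \<Rightarrow> absv (x - y) / (max 1 (absv x) * max 1 (absv y)))"

definition chordal_at :: "('a::field \<Rightarrow> real) \<Rightarrow> 'a option \<Rightarrow> 'a option filter" where
  "chordal_at absv x = (INF e\<in>{0<..}. principal {y. y \<noteq> x \<and> chordal absv x y < e})"

definition sph_deriv :: "('a::field \<Rightarrow> real) \<Rightarrow> ('a option \<Rightarrow> 'a option) \<Rightarrow> 'a option \<Rightarrow> real" where
  "sph_deriv absv g x = Lim (chordal_at absv x) (\<lambda>y. chordal absv (g x) (g y) / chordal absv x y)"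

end

(*
  On the unit circle, f(z) = z + 1 + c + c/z is an isometry shifting residue classes by 1; on the
  circle |z| = |c| it expands distances by the factor 1/|c|. As the residue characteristic is 0,
  iterated preimages can be chosen to follow any prescribed pattern of visits to these circles,
  and completeness yields a point b whose orbit lies on |z| = |c| exactly at the times N^k - 1
  (with N >= 1/|c|) and on the unit circle otherwise. Near b, f^n is then a similarity of ratio
  (f^n)^natural(b) = |c|^-(number of returns before n) <= n/|c|.

  The expansion blows every small disk around b up to the disk |z| <= |c|, and three more
  iterates map that disk onto all of P^1 (two of them already reach the pole 0). The Berkovich
  disk is compact, so its image is closed; it contains infinity and the dense set of type I
  points, hence it is the whole Berkovich line, and b lies in the Julia set.
*)
theory Submission
  imports Defs
begin


section \<open>Ultrametric absolute values\<close>

locale nonarch_field =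
  fixes absv :: "'a::field \<Rightarrow> real"
  assumes nonarch: "nonarch_abs absv"
begin

lemma absv_nonneg [simp]: "0 \<le> absv x"
  and absv_eq_0_iff [simp]: "absv x = 0 \<longleftrightarrow> x = 0"
  and absv_mult [simp]: "absv (x * y) = absv x * absv y"
  and absv_add_le_max: "absv (x + y) \<le> max (absv x) (absv y)"
  using nonarch unfolding nonarch_abs_def by blast+

lemma absv_0 [simp]: "absv 0 = 0"
  by simp

lemma absv_pos_iff [simp]: "0 < absv x \<longleftrightarrow> x \<noteq> 0"
  using absv_nonneg[of x] absv_eq_0_iff[of x] by linarith

lemma absv_1 [simp]: "absv 1 = 1"
  using absv_mult[of 1 1] absv_eq_0_iff[of 1] by (metis mult_cancel_left1 one_neq_zero)

lemma absv_minus [simp]: "absv (- x) = absv x"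
proof -
  have "absv (-1) * absv (-1) = 1" using absv_mult[of "-1" "-1"] by simp
  then have "(absv (-1) - 1) * (absv (-1) + 1) = 0" by (simp add: algebra_simps)
  then have "absv (-1) = 1" using absv_nonneg[of "-1"] by auto
  then show ?thesis using absv_mult[of "-1" x] by simp
qed

lemma absv_minus_commute: "absv (x - y) = absv (y - x)"
  by (metis absv_minus minus_diff_eq)

lemma absv_diff_le_max: "absv (x - y) \<le> max (absv x) (absv y)"
  using absv_add_le_max[of x "-y"] by simp

lemma absv_inverse [simp]: "absv (inverse x) = inverse (absv x)"
proof (cases "x = 0")
  case False
  then have "absv x * absv (inverse x) = 1" using absv_mult[of x "inverse x"] by simp
  then show ?thesis by (simp add: inverse_unique)
qed auto

lemma absv_divide [simp]: "absv (x / y) = absv x / absv y"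
  by (simp add: divide_inverse)

lemma absv_power [simp]: "absv (x ^ n) = absv x ^ n"
  by (induction n) auto

lemma absv_add_less: "absv x < r \<Longrightarrow> absv y < r \<Longrightarrow> absv (x + y) < r"
  using absv_add_le_max[of x y] by simp

lemma absv_add_eq_right: assumes "absv x < absv y" shows "absv (x + y) = absv y"
proof -
  have "absv y \<le> max (absv (x + y)) (absv x)" using absv_diff_le_max[of "x + y" x] by simp
  then show ?thesis using absv_add_le_max[of x y] assms by linarith
qed

lemma absv_add_eq_left: "absv x < absv y \<Longrightarrow> absv (y + x) = absv y"
  using absv_add_eq_right by (simp add: add.commute)

lemma absv_diff_eq_left: "absv x < absv y \<Longrightarrow> absv (y - x) = absv y"
  using absv_add_eq_left[of "-x" y] by simp

lemma absv_diff_eq_right: "absv x < absv y \<Longrightarrow> absv (x - y) = absv y"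
  by (metis absv_minus_commute absv_diff_eq_left)

lemma absv_of_nat_le_1: "absv (of_nat n) \<le> 1"
proof (induction n)
  case (Suc n)
  then show ?case using absv_add_le_max[of 1 "of_nat n"] by simp
qed (use absv_eq_0_iff in simp)

end

locale Cv_residue_char_0 = nonarch_field absv for absv :: "'a::field_char_0 \<Rightarrow> real" +
  assumes Cv: "Cv_field absv" and residue_char_0: "residue_char_zero absv"
begin

lemma absv_of_nat [simp]: "0 < n \<Longrightarrow> absv (of_nat n) = 1"
  using residue_char_0 absv_of_nat_le_1[of n] unfolding residue_char_zero_def
  by (simp add: not_less order_antisym)

lemma absv_numeral [simp]: "absv (numeral k) = 1"
  using absv_of_nat[of "numeral k"] by simp

lemma absv_of_nat_diff: assumes "m \<noteq> n" shows "absv (of_nat m - of_nat n) = 1"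
proof (cases m n rule: linorder_cases)
  case less
  then have "of_nat m - of_nat n = - (of_nat (n - m) :: 'a)" by (simp add: of_nat_diff less_imp_le)
  then show ?thesis
    using less absv_of_nat[of "n - m"] absv_minus_commute[of "of_nat m" "of_nat n"] by simp
next
  case greater
  then have "of_nat m - of_nat n = (of_nat (m - n) :: 'a)" by (simp add: of_nat_diff)
  then show ?thesis using greater absv_of_nat[of "m - n"] by simp
qed (use assms in simp)

lemma has_root: "0 < degree (p :: 'a poly) \<Longrightarrow> \<exists>x. poly p x = 0"
  using Cv unfolding Cv_field_def alg_closed_def by blast

lemma has_nth_root: assumes "0 < n" shows "\<exists>y. y ^ n = (x :: 'a)"
proof -
  have "degree (monom 1 n + [:-x:]) = n"
    using assms by (subst degree_add_eq_left) (auto simp: degree_monom_eq)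
  then show ?thesis using has_root[of "monom 1 n + [:-x:]"] assms by (auto simp: poly_monom)
qed

lemma absv_Cauchy_convergent:
  fixes X :: "nat \<Rightarrow> 'a"
  assumes "\<forall>e>0. \<exists>N. \<forall>m\<ge>N. \<forall>n\<ge>N. absv (X m - X n) < e"
  shows "\<exists>L. \<forall>e>0. \<exists>N. \<forall>n\<ge>N. absv (X n - L) < e"
proof -
  have "complete_abs absv" using Cv by (simp add: Cv_field_def)
  then show ?thesis using assms unfolding complete_abs_def by blast
qed

lemma exists_absv_between_0_1: "\<exists>p. 0 < absv p \<and> absv p < 1"
proof -
  obtain x where x: "absv x \<noteq> 0" "absv x \<noteq> 1"
    using Cv unfolding Cv_field_def nontrivial_abs_def by blast
  show ?thesis
  proof (cases "absv x < 1")
    case False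
    then show ?thesis using x by (intro exI[of _ "inverse x"]) (auto simp: field_simps)
  qed (use x in auto)
qed

lemma exists_absv_less: assumes "0 < e" shows "\<exists>t. 0 < absv t \<and> absv t < e"
proof -
  obtain p where p: "0 < absv p" "absv p < 1" using exists_absv_between_0_1 by blast
  obtain n where "absv p ^ n < e" using real_arch_pow_inv[OF assms p(2)] by blast
  then show ?thesis using p by (intro exI[of _ "p ^ n"]) auto
qed

lemma exists_absv_greater: "\<exists>t. B < absv t"
proof -
  have "0 < 1 / max B 1" by simp
  then obtain t where t: "0 < absv t" "absv t < 1 / max B 1" using exists_absv_less by blast
  then have "inverse (1 / max B 1) < inverse (absv t)" by (intro less_imp_inverse_less) auto
  then have "max B 1 < inverse (absv t)" by simp
  then show ?thesis by (intro exI[of _ "inverse t"]) auto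
qed

lemma exists_absv_between_1: assumes "\<rho> < 1" shows "\<exists>y. \<rho> < absv y \<and> absv y < 1"
proof -
  obtain p where p: "0 < absv p" "absv p < 1" using exists_absv_between_0_1 by blast
  have "max \<rho> 0 < 1" using assms by simp
  then obtain n where n: "max \<rho> 0 ^ n < absv p" using real_arch_pow_inv[OF p(1)] by blast
  have "0 < n" using n p by (cases n) auto
  then obtain y where "y ^ n = p" using has_nth_root by blast
  then have y: "max \<rho> 0 ^ n < absv y ^ n" "absv y ^ n < 1 ^ n" using n p by auto
  have "max \<rho> 0 < absv y" by (rule power_less_imp_less_base[OF y(1)]) simp
  moreover have "absv y < 1" by (rule power_less_imp_less_base[OF y(2)]) simp
  ultimately show ?thesis by auto
qed

lemma exists_absv_between: assumes "0 \<le> lo" "lo < hi" shows "\<exists>x. lo < absv x \<and> absv x < hi"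
proof (cases "lo = 0")
  case True then show ?thesis using exists_absv_less[of hi] assms by auto
next
  case False
  then have lo: "0 < lo" using assms by simp
  obtain y where y: "lo / hi < absv y" "absv y < 1"
    using exists_absv_between_1[of "lo / hi"] lo assms by auto
  obtain x0 where x0: "hi < absv x0" using exists_absv_greater by blast
  have "0 < absv y" using y lo assms by (smt (verit) divide_nonneg_pos)
  have x0_pos: "0 < absv x0" using x0 assms by linarith
  then have "0 < hi / absv x0" using assms by simp
  then obtain k where "absv y ^ k < hi / absv x0" using real_arch_pow_inv y(2) by blast
  then have k: "absv y ^ k * absv x0 < hi" using x0_pos by (simp add: field_simps)
  obtain m where m: "absv y ^ m * absv x0 < hi" "\<forall>i<m. \<not> absv y ^ i * absv x0 < hi"
    using ex_least_nat_le[of "\<lambda>i. absv y ^ i * absv x0 < hi" k] k x0 by auto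
  then obtain j where j: "m = Suc j" using x0 by (cases m) auto
  then have "hi \<le> absv y ^ j * absv x0" using m(2) by (simp add: not_less)
  have "lo = lo / hi * hi" using assms by simp
  also have "\<dots> < absv y * hi" using y(1) assms lo by (intro mult_strict_right_mono) auto
  also have "\<dots> \<le> absv y * (absv y ^ j * absv x0)" using \<open>hi \<le> _\<close> by (intro mult_left_mono) auto
  finally have "lo < absv y * (absv y ^ j * absv x0)" .
  then show ?thesis using m(1) j by (intro exI[of _ "y ^ m * x0"]) (simp add: mult.assoc)
qed

end

section \<open>The Berkovich line\<close>

context nonarch_field
begin

lemma typeI_in_berkA1: "typeI absv a \<in> berkA1 absv"
  unfolding berkA1_def berk_seminorm_def typeI_def by (auto simp: absv_add_le_max)

definition coeff_bound :: "'a poly \<Rightarrow> real \<Rightarrow> real" where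
  "coeff_bound g R = (\<Sum>i\<le>degree g. absv (coeff g i) * R ^ i)"

lemma coeff_bound_nonneg: "0 \<le> R \<Longrightarrow> 0 \<le> coeff_bound g R"
  unfolding coeff_bound_def by (simp add: sum_nonneg)

context
  fixes \<zeta> assumes \<zeta>: "\<zeta> \<in> berkA1 absv"
begin

lemma berkA1_const [simp]: "\<zeta> [:a:] = absv a"
  and berkA1_nonneg [simp]: "0 \<le> \<zeta> p"
  and berkA1_mult [simp]: "\<zeta> (p * q) = \<zeta> p * \<zeta> q"
  and berkA1_add_le_max: "\<zeta> (p + q) \<le> max (\<zeta> p) (\<zeta> q)"
  using \<zeta> unfolding berkA1_def berk_seminorm_def by blast+

lemma berkA1_0 [simp]: "\<zeta> 0 = 0"
  using berkA1_const[of 0] by simp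

lemma berkA1_1 [simp]: "\<zeta> 1 = 1"
  using berkA1_const[of 1] by (simp add: pCons_one)

lemma berkA1_smult [simp]: "\<zeta> (smult a p) = absv a * \<zeta> p"
  using berkA1_mult[of "[:a:]" p] by simp

lemma berkA1_minus [simp]: "\<zeta> (- p) = \<zeta> p"
  using berkA1_smult[of "-1" p] by simp

lemma berkA1_power [simp]: "\<zeta> (p ^ n) = \<zeta> p ^ n"
  by (induction n) simp_all

lemma berkA1_diff_le_max: "\<zeta> (p - q) \<le> max (\<zeta> p) (\<zeta> q)"
  using berkA1_add_le_max[of p "-q"] by simp

lemma berkA1_add_eq_right: assumes "\<zeta> p < \<zeta> q" shows "\<zeta> (p + q) = \<zeta> q"
proof -
  have "\<zeta> q \<le> max (\<zeta> (p + q)) (\<zeta> p)" using berkA1_diff_le_max[of "p + q" p] by simp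
  then show ?thesis using berkA1_add_le_max[of p q] assms by linarith
qed

lemma berkA1_sum_le: "\<zeta> (sum f S) \<le> (\<Sum>i\<in>S. \<zeta> (f i))"
proof (induction S rule: infinite_finite_induct)
  case (insert x F)
  have "\<zeta> (sum f (insert x F)) \<le> max (\<zeta> (f x)) (\<zeta> (sum f F))"
    using insert.hyps berkA1_add_le_max by simp
  also have "\<dots> \<le> \<zeta> (f x) + (\<Sum>i\<in>F. \<zeta> (f i))"
    using insert.IH berkA1_nonneg[of "f x"] by (simp add: sum_nonneg add_increasing)
  finally show ?case using insert.hyps by simp
qed simp_all

lemma berkA1_X_le: "\<zeta> [:0, 1:] \<le> max (\<zeta> [:-a, 1:]) (absv a)"
  using berkA1_add_le_max[of "[:-a, 1:]" "[:a:]"] by simp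

lemma berkA1_le_coeff_bound:
  assumes "\<zeta> [:0, 1:] \<le> R"
  shows "\<zeta> g \<le> coeff_bound g R"
proof -
  have "\<zeta> g \<le> (\<Sum>i\<le>degree g. \<zeta> (monom (coeff g i) i))"
    using berkA1_sum_le by (metis poly_as_sum_of_monoms)
  also have "\<dots> \<le> (\<Sum>i\<le>degree g. absv (coeff g i) * R ^ i)"
    using assms by (intro sum_mono) (auto simp: monom_altdef intro!: mult_left_mono power_mono)
  finally show ?thesis unfolding coeff_bound_def .
qed

end

abbreviation pointwise_top :: "('a poly \<Rightarrow> real) topology" where
  "pointwise_top \<equiv> product_topology (\<lambda>_. euclideanreal) UNIV"

lemma continuous_map_pointwise_eval: "continuous_map pointwise_top euclideanreal (\<lambda>f. f g)"
  by (rule continuous_map_product_projection) simp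

lemma openin_pointwise_eval: "open U \<Longrightarrow> openin pointwise_top {f. f g \<in> U}"
  using openin_continuous_map_preimage[OF continuous_map_pointwise_eval, of U] by simp

lemma openin_berkA1_top_basic: "open U \<Longrightarrow> openin (berkA1_top absv) {\<zeta> \<in> berkA1 absv. \<zeta> g \<in> U}"
  unfolding berkA1_top_def by (rule topology_generated_by_Basis) blast

lemma topspace_berkA1_top [simp]: "topspace (berkA1_top absv) = berkA1 absv"
proof -
  have "{\<zeta> \<in> berkA1 absv. \<zeta> 0 \<in> UNIV} \<in> {{\<zeta> \<in> berkA1 absv. \<zeta> g \<in> U} | g U. open (U :: real set)}"
    by blast
  then show ?thesis unfolding berkA1_top_def topology_generated_by_topspace by auto
qed

lemma berkA1_top_eq: "berkA1_top absv = subtopology pointwise_top (berkA1 absv)"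
proof -
  have "continuous_map (berkA1_top absv) (subtopology pointwise_top (berkA1 absv)) id"
  proof -
    have "continuous_map (berkA1_top absv) euclideanreal (\<lambda>\<zeta>. \<zeta> g)" for g
      unfolding continuous_map_def using openin_berkA1_top_basic by simp
    then show ?thesis
      by (auto simp: continuous_map_in_subtopology continuous_map_componentwise_UNIV)
  qed
  moreover have "continuous_map (subtopology pointwise_top (berkA1 absv)) (berkA1_top absv) id"
    unfolding berkA1_top_def
  proof (rule continuous_on_generated_topo)
    fix S assume "S \<in> {{\<zeta> \<in> berkA1 absv. \<zeta> g \<in> U} | g U. open U}"
    then obtain g U where "S = {\<zeta> \<in> berkA1 absv. \<zeta> g \<in> U}" "open U" by blast
    then show "openin (subtopology pointwise_top (berkA1 absv))
        (id -` S \<inter> topspace (subtopology pointwise_top (berkA1 absv)))"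
      using openin_pointwise_eval unfolding openin_subtopology by auto
  qed auto
  moreover have "topspace (subtopology pointwise_top (berkA1 absv)) = topspace (berkA1_top absv)"
    by simp
  ultimately have "openin (berkA1_top absv) S \<longleftrightarrow> openin (subtopology pointwise_top (berkA1 absv)) S"
    for S
    using
      topology_finer_continuous_id[of "berkA1_top absv" "subtopology pointwise_top (berkA1 absv)"]
      topology_finer_continuous_id[of "subtopology pointwise_top (berkA1 absv)" "berkA1_top absv"]
    by auto
  then show ?thesis by (simp add: topology_eq)
qed

lemma openin_berkA1_top_subset: "openin (berkA1_top absv) U \<Longrightarrow> U \<subseteq> berkA1 absv"
  using openin_subset by fastforce

lemma closedin_berkA1: "closedin pointwise_top (berkA1 absv)"
proof -
  have "closedin pointwise_top {f. f [:a:] = absv a}" for a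
    using closedin_continuous_map_preimage[OF continuous_map_pointwise_eval, of "{absv a}"] by simp
  moreover have "closedin pointwise_top {f. 0 \<le> f p}" for p
    using closedin_continuous_map_preimage[OF continuous_map_pointwise_eval, of "{0..}"] by simp
  moreover have "closedin pointwise_top {f. f (p * q) = f p * f q}" for p q
  proof -
    have "continuous_map pointwise_top euclideanreal (\<lambda>f. f (p * q) - f p * f q)"
      by (intro continuous_map_diff continuous_map_real_mult continuous_map_pointwise_eval)
    from closedin_continuous_map_preimage[OF this, of "{0}"] show ?thesis by simp
  qed
  moreover have "closedin pointwise_top {f. f (p + q) \<le> max (f p) (f q)}" for p q
  proof -
    have "continuous_map pointwise_top euclideanreal (\<lambda>f. f (p + q) - max (f p) (f q))"
      by (intro continuous_map_diff continuous_map_real_max continuous_map_pointwise_eval)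
    from closedin_continuous_map_preimage[OF this, of "{..0}"] show ?thesis by simp
  qed
  moreover have eq: "berkA1 absv = \<Inter>(range (\<lambda>a. {f. f [:a:] = absv a}))
      \<inter> \<Inter>(range (\<lambda>p. {f. 0 \<le> f p}))
      \<inter> \<Inter>(range (\<lambda>(p,q). {f. f (p * q) = f p * f q}))
      \<inter> \<Inter>(range (\<lambda>(p,q). {f. f (p + q) \<le> max (f p) (f q)}))"
    unfolding berkA1_def berk_seminorm_def by auto
  ultimately show ?thesis unfolding eq by (intro closedin_Int closedin_Inter) auto
qed

definition berk_disk :: "'a \<Rightarrow> real \<Rightarrow> ('a poly \<Rightarrow> real) set" where
  "berk_disk a r = {\<zeta> \<in> berkA1 absv. \<zeta> [:-a, 1:] \<le> r}"

lemma typeI_in_berk_disk_iff: "typeI absv x \<in> berk_disk a r \<longleftrightarrow> absv (x - a) \<le> r"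
  unfolding berk_disk_def using typeI_in_berkA1[of x] by (simp add: typeI_def add.commute)

text \<open>Tychonoff: a Berkovich disk is a closed subset of a product of compact intervals.\<close>
lemma compactin_berk_disk: "compactin (berkA1_top absv) (berk_disk a r)"
proof -
  define R where "R = max r (absv a)"
  define box where "box = Pi\<^sub>E UNIV (\<lambda>g. {0..coeff_bound g R})"
  have sub: "berk_disk a r \<subseteq> box"
  proof
    fix \<zeta> assume "\<zeta> \<in> berk_disk a r"
    then have \<zeta>: "\<zeta> \<in> berkA1 absv" "\<zeta> [:0, 1:] \<le> R"
      using berkA1_X_le[of \<zeta> a] unfolding berk_disk_def R_def by auto
    show "\<zeta> \<in> box" unfolding box_def PiE_def
      using berkA1_le_coeff_bound[OF \<zeta>] berkA1_nonneg[OF \<zeta>(1)] by auto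
  qed
  have box: "compactin pointwise_top box"
    unfolding box_def by (simp add: compactin_PiE)
  have "closedin pointwise_top (berk_disk a r)"
  proof -
    have "berk_disk a r = berkA1 absv \<inter> {f. f [:-a, 1:] \<in> {..r}}" unfolding berk_disk_def by auto
    moreover have "closedin pointwise_top {f. f [:-a, 1:] \<in> {..r}}"
      using closedin_continuous_map_preimage[OF continuous_map_pointwise_eval, of "{..r}"] by simp
    ultimately show ?thesis using closedin_berkA1 by auto
  qed
  then have "compactin pointwise_top (berk_disk a r)" by (rule closed_compactin[OF box sub])
  then show ?thesis unfolding berkA1_top_eq by (simp add: compactin_subtopology berk_disk_def)
qed

lemma istopology_berkP1_open: "istopology (berkP1_open absv)"
  unfolding istopology_def
proof (intro conjI allI impI ballI)
  fix S T assume S: "berkP1_open absv S" and T: "berkP1_open absv T"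
  have "Some -` (S \<inter> T) = Some -` S \<inter> Some -` T"
    and "berkA1 absv - Some -` (S \<inter> T) = (berkA1 absv - Some -` S) \<union> (berkA1 absv - Some -` T)"
    by auto
  then show "berkP1_open absv (S \<inter> T)"
    using S T unfolding berkP1_open_def by (auto intro: compactin_Un)
next
  fix K assume K: "\<forall>S\<in>K. berkP1_open absv S"
  have "Some -` \<Union>K = \<Union>((\<lambda>S. Some -` S) ` K)" by auto
  then have open_K: "openin (berkA1_top absv) (Some -` \<Union>K)"
    using K unfolding berkP1_open_def by (auto intro: openin_Union)
  have "compactin (berkA1_top absv) (berkA1 absv - Some -` \<Union>K)" if "S \<in> K" "None \<in> S" for S
  proof (rule closed_compactin)
    show "compactin (berkA1_top absv) (berkA1 absv - Some -` S)"
      using K that unfolding berkP1_open_def by auto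
    show "closedin (berkA1_top absv) (berkA1 absv - Some -` \<Union>K)"
      using open_K by (metis closedin_diff closedin_topspace topspace_berkA1_top)
  qed (use that in auto)
  then show "berkP1_open absv (\<Union>K)"
    using K open_K unfolding berkP1_open_def by blast
qed

definition berkP1_top :: "('a poly \<Rightarrow> real) option topology" where
  "berkP1_top = topology (berkP1_open absv)"

lemma openin_berkP1_top: "openin berkP1_top = berkP1_open absv"
  unfolding berkP1_top_def using istopology_berkP1_open by simp

lemma topspace_berkP1_top [simp]: "topspace berkP1_top = berkP1 absv"
proof -
  have "Some -` berkP1 absv = berkA1 absv" unfolding berkP1_def by auto
  then have "openin berkP1_top (berkP1 absv)"
    unfolding openin_berkP1_top berkP1_open_def using openin_topspace[of "berkA1_top absv"] by simp
  then show ?thesis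
    using openin_subset unfolding topspace_def openin_berkP1_top berkP1_open_def by auto
qed

lemma openin_berkP1_top_Some: "openin (berkA1_top absv) S \<Longrightarrow> openin berkP1_top (Some ` S)"
  unfolding openin_berkP1_top berkP1_open_def berkP1_def
  using openin_berkA1_top_subset by (auto simp: inj_vimage_image_eq)

lemma openin_berkP1_top_insert_None:
  assumes "openin (berkA1_top absv) S" "compactin (berkA1_top absv) (berkA1 absv - S)"
  shows "openin berkP1_top (insert None (Some ` S))"
proof -
  have "Some -` insert None (Some ` S) = S" by auto
  then show ?thesis
    using assms openin_berkA1_top_subset[OF assms(1)]
    unfolding openin_berkP1_top berkP1_open_def berkP1_def by auto
qed

lemma continuous_map_Some: "continuous_map (berkA1_top absv) berkP1_top Some"
  unfolding continuous_map_def
proof (intro conjI allI impI)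
  show "Some \<in> topspace (berkA1_top absv) \<rightarrow> topspace berkP1_top" by (auto simp: berkP1_def)
  fix U assume "openin berkP1_top U"
  then have "openin (berkA1_top absv) (Some -` U)"
    unfolding openin_berkP1_top berkP1_open_def by auto
  moreover have "{x \<in> topspace (berkA1_top absv). Some x \<in> U} = Some -` U"
    using openin_berkA1_top_subset[OF calculation] by auto
  ultimately show "openin (berkA1_top absv) {x \<in> topspace (berkA1_top absv). Some x \<in> U}" by simp
qed

text \<open>The complement of a closed disk around 0 is an open neighbourhood of infinity.\<close>
lemma berkP1_separate_None:
  assumes "\<zeta> \<in> berkA1 absv"
  shows "\<exists>U V. openin berkP1_top U \<and> openin berkP1_top V \<and> Some \<zeta> \<in> U \<and> None \<in> V \<and> disjnt U V"
proof -
  define R where "R = \<zeta> [:0, 1:] + 1"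
  let ?U = "Some ` {\<eta> \<in> berkA1 absv. \<eta> [:0, 1:] \<in> {..<R}}"
  let ?V = "insert None (Some ` {\<eta> \<in> berkA1 absv. \<eta> [:0, 1:] \<in> {R<..}})"
  have "berkA1 absv - {\<eta> \<in> berkA1 absv. \<eta> [:0, 1:] \<in> {R<..}} = berk_disk 0 R"
    unfolding berk_disk_def by auto
  then have "openin berkP1_top ?V"
    by (intro openin_berkP1_top_insert_None openin_berkA1_top_basic)
       (simp_all add: compactin_berk_disk)
  moreover have "openin berkP1_top ?U"
    by (intro openin_berkP1_top_Some openin_berkA1_top_basic) simp
  moreover have "Some \<zeta> \<in> ?U" "disjnt ?U ?V" using assms unfolding R_def disjnt_def by auto
  ultimately show ?thesis by blast
qed

lemma berkP1_separate_Some: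
  assumes "\<zeta> \<in> berkA1 absv" "\<xi> \<in> berkA1 absv" "\<zeta> g < \<xi> g"
  shows "\<exists>U V. openin berkP1_top U \<and> openin berkP1_top V \<and> Some \<zeta> \<in> U \<and> Some \<xi> \<in> V \<and> disjnt U V"
proof -
  define m where "m = (\<zeta> g + \<xi> g) / 2"
  let ?U = "Some ` {\<eta> \<in> berkA1 absv. \<eta> g \<in> {..<m}}"
  let ?V = "Some ` {\<eta> \<in> berkA1 absv. \<eta> g \<in> {m<..}}"
  have "openin berkP1_top ?U" "openin berkP1_top ?V"
    by (intro openin_berkP1_top_Some openin_berkA1_top_basic; simp)+
  moreover have "Some \<zeta> \<in> ?U" "Some \<xi> \<in> ?V" "disjnt ?U ?V"
    using assms unfolding m_def disjnt_def by auto
  ultimately show ?thesis by blast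
qed

lemma Hausdorff_berkP1_top: "Hausdorff_space berkP1_top"
  unfolding Hausdorff_space_def topspace_berkP1_top
proof (intro allI impI)
  fix x y assume xy: "x \<in> berkP1 absv \<and> y \<in> berkP1 absv \<and> x \<noteq> y"
  show "\<exists>U V. openin berkP1_top U \<and> openin berkP1_top V \<and> x \<in> U \<and> y \<in> V \<and> disjnt U V"
  proof (cases x)
    case None
    then obtain \<xi> where "y = Some \<xi>" "\<xi> \<in> berkA1 absv" using xy by (auto simp: berkP1_def)
    then show ?thesis using None berkP1_separate_None[of \<xi>] by (metis disjnt_sym)
  next
    case (Some \<zeta>)
    then have \<zeta>: "\<zeta> \<in> berkA1 absv" using xy by (auto simp: berkP1_def)
    show ?thesis
    proof (cases y)
      case None
      then show ?thesis using Some berkP1_separate_None[OF \<zeta>] by blast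
    next
      case (Some \<xi>)
      then have \<xi>: "\<xi> \<in> berkA1 absv" "\<zeta> \<noteq> \<xi>" using xy \<open>x = Some \<zeta>\<close> by (auto simp: berkP1_def)
      then obtain g where "\<zeta> g < \<xi> g \<or> \<xi> g < \<zeta> g" by (meson ext linorder_neqE_linordered_idom)
      then show ?thesis
        using berkP1_separate_Some[OF \<zeta> \<xi>(1)] berkP1_separate_Some[OF \<xi>(1) \<zeta>]
          \<open>x = Some \<zeta>\<close> Some by (metis disjnt_sym)
    qed
  qed
qed

lemma berkA1_linear_factor_le:
  assumes "\<zeta> \<in> berkA1 absv"
  shows "\<zeta> [:-\<alpha>, 1:] \<le> max (\<zeta> [:-a, 1:]) (absv (a - \<alpha>))"
    and "absv (a - \<alpha>) \<le> max (\<zeta> [:-\<alpha>, 1:]) (\<zeta> [:-a, 1:])"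
proof -
  have "[:-\<alpha>, 1:] = [:-a, 1:] + [:a - \<alpha>:]" "[:a - \<alpha>:] = [:-\<alpha>, 1:] - [:-a, 1:]" by simp_all
  then show "\<zeta> [:-\<alpha>, 1:] \<le> max (\<zeta> [:-a, 1:]) (absv (a - \<alpha>))"
    and "absv (a - \<alpha>) \<le> max (\<zeta> [:-\<alpha>, 1:]) (\<zeta> [:-a, 1:])"
    using berkA1_add_le_max[OF assms, of "[:-a, 1:]" "[:a - \<alpha>:]"]
      berkA1_diff_le_max[OF assms, of "[:-\<alpha>, 1:]" "[:-a, 1:]"] berkA1_const[OF assms, of "a - \<alpha>"]
    by metis+
qed

lemma berkA1_open_contains_box:
  assumes "openin (berkA1_top absv) U" "\<zeta> \<in> U"
  shows "\<exists>V. finite {g. V g \<noteq> UNIV} \<and> (\<forall>g. open (V g)) \<and> (\<forall>g. \<zeta> g \<in> V g) \<and>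
           (\<forall>\<xi>\<in>berkA1 absv. (\<forall>g. \<xi> g \<in> V g) \<longrightarrow> \<xi> \<in> U)"
proof -
  obtain W where W: "openin pointwise_top W" "U = W \<inter> berkA1 absv"
    using assms(1) unfolding berkA1_top_eq openin_subtopology by blast
  then obtain V where "finite {i. V i \<noteq> UNIV}" "\<forall>i. open (V i)" "\<zeta> \<in> Pi\<^sub>E UNIV V" "Pi\<^sub>E UNIV V \<subseteq> W"
    using assms(2) unfolding openin_product_topology_alt by auto
  then show ?thesis using W(2) by (intro exI[of _ V]) (auto simp: PiE_iff)
qed

end

context Cv_residue_char_0
begin

lemma poly_splits:
  "\<exists>xs. (g :: 'a poly) = smult (lead_coeff g) (prod_list (map (\<lambda>x. [:-x, 1:]) xs))"
proof (induction "degree g" arbitrary: g)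
  case 0
  then obtain a where "g = [:a:]" by (metis degree_eq_zeroE)
  then show ?case by (intro exI[of _ "[]"]) simp
next
  case (Suc n)
  then obtain a where "poly g a = 0" using has_root[of g] by auto
  define q where "q = synthetic_div g a"
  have g: "g = [:-a, 1:] * q"
    using synthetic_div_correct'[of a g] \<open>poly g a = 0\<close> by (simp add: q_def)
  obtain xs where xs: "q = smult (lead_coeff q) (prod_list (map (\<lambda>x. [:-x, 1:]) xs))"
    using Suc unfolding q_def by (metis degree_synthetic_div diff_Suc_1)
  have "lead_coeff g = lead_coeff [:-a, 1:] * lead_coeff q" unfolding g by (rule lead_coeff_mult)
  then have "g = smult (lead_coeff g) (prod_list (map (\<lambda>x. [:-x, 1:]) (a # xs)))"
    by (subst g, subst xs) (simp add: mult_smult_right)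
  then show ?case by blast
qed

text \<open>Residue characteristic 0: distinct multiples of \<tau> are at distance \<bar>\<tau>\<bar>,
  so each point is within \<bar>\<tau>\<bar> of at most one of them.\<close>
lemma exists_multiple_far:
  assumes "finite B"
  shows "\<exists>n>0. \<forall>\<beta>\<in>B. absv \<tau> \<le> absv (of_nat n * \<tau> - \<beta>)"
proof -
  define near where "near \<beta> = {n::nat. absv (of_nat n * \<tau> - \<beta>) < absv \<tau>}" for \<beta>
  have same: "m = n" if "m \<in> near \<beta>" "n \<in> near \<beta>" for m n \<beta>
  proof (rule ccontr)
    assume "m \<noteq> n"
    have "(of_nat m - of_nat n) * \<tau> = (of_nat m * \<tau> - \<beta>) - (of_nat n * \<tau> - \<beta>)"
      by (simp add: algebra_simps)
    then have "absv ((of_nat m - of_nat n) * \<tau>) < absv \<tau>"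
      using that absv_diff_le_max[of "of_nat m * \<tau> - \<beta>" "of_nat n * \<tau> - \<beta>"] unfolding near_def
      by (metis max_less_iff_conj mem_Collect_eq order_le_less_trans)
    then show False using absv_of_nat_diff[OF \<open>m \<noteq> n\<close>] by simp
  qed
  have "finite (near \<beta>)" for \<beta>
  proof (cases "near \<beta> = {}")
    case False
    then obtain m where "m \<in> near \<beta>" by blast
    then have "near \<beta> \<subseteq> {m}" using same by blast
    then show ?thesis using finite_subset by blast
  qed simp
  then have "finite (insert 0 (\<Union>\<beta>\<in>B. near \<beta>))" using assms by simp
  then obtain n where "n \<notin> insert 0 (\<Union>\<beta>\<in>B. near \<beta>)"
    using ex_new_if_finite infinite_UNIV_nat by blast
  then show ?thesis unfolding near_def by (auto simp: not_less)
qed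

lemma exists_point_approx_linear_factors:
  assumes \<zeta>: "\<zeta> \<in> berkA1 absv" and "finite A" "0 < \<delta>"
  shows "\<exists>a. \<forall>\<alpha>\<in>A. \<bar>absv (a - \<alpha>) - \<zeta> [:-\<alpha>, 1:]\<bar> < \<delta>"
proof -
  define r where "r = (INF x. \<zeta> [:-x, 1:])"
  have bdd: "bdd_below (range (\<lambda>x. \<zeta> [:-x, 1:]))" using \<zeta> by (auto intro: bdd_belowI[of _ 0])
  have r_le: "r \<le> \<zeta> [:-x, 1:]" for x unfolding r_def using bdd by (rule cINF_lower) simp
  have r_nonneg: "0 \<le> r" unfolding r_def using \<zeta> by (intro cINF_greatest) auto
  obtain x0 where x0: "\<zeta> [:-x0, 1:] < r + \<delta> / 2"
    using cInf_lessD[of "range (\<lambda>x. \<zeta> [:-x, 1:])" "r + \<delta> / 2"] \<open>0 < \<delta>\<close> unfolding r_def by auto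
  obtain \<tau> where \<tau>: "max (r - \<delta> / 2) 0 < absv \<tau>" "absv \<tau> < r + \<delta> / 2"
    using exists_absv_between[of "max (r - \<delta> / 2) 0" "r + \<delta> / 2"] \<open>0 < \<delta>\<close> r_nonneg by auto
  obtain n :: nat where n: "0 < n" "\<forall>\<beta>\<in>(\<lambda>\<alpha>. \<alpha> - x0) ` A. absv \<tau> \<le> absv (of_nat n * \<tau> - \<beta>)"
    using exists_multiple_far \<open>finite A\<close> by (metis finite_imageI)
  define a where "a = x0 + of_nat n * \<tau>"
  have p: "\<zeta> [:-a, 1:] < r + \<delta> / 2"
    using berkA1_linear_factor_le(1)[OF \<zeta>, of a x0] x0 \<tau>(2) n(1)
    by (simp add: a_def absv_minus_commute)
  show ?thesis
  proof (intro exI[of _ a] ballI)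
    fix \<alpha> assume "\<alpha> \<in> A"
    then have "absv \<tau> \<le> absv (a - \<alpha>)" using n(2) unfolding a_def by (auto simp: algebra_simps)
    then show "\<bar>absv (a - \<alpha>) - \<zeta> [:-\<alpha>, 1:]\<bar> < \<delta>"
      using berkA1_linear_factor_le[OF \<zeta>, of \<alpha> a] r_le[of \<alpha>] p \<tau> absv_minus_commute[of \<alpha> a]
      by (auto simp: abs_less_iff)
  qed
qed

lemma absv_poly_linear_factors:
  "absv (poly (prod_list (map (\<lambda>x. [:-x, 1:]) xs)) a) = prod_list (map (\<lambda>x. absv (a - x)) xs)"
proof (induction xs)
  case (Cons y ys)
  have "poly (prod_list (map (\<lambda>x. [:-x, 1:]) (y # ys))) a
      = (a - y) * poly (prod_list (map (\<lambda>x. [:-x, 1:]) ys)) a"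
    by (simp add: algebra_simps)
  then show ?case using Cons by simp
qed simp

lemma berkA1_linear_factors:
  "\<zeta> \<in> berkA1 absv \<Longrightarrow>
    \<zeta> (prod_list (map (\<lambda>x. [:-x, 1:]) xs)) = prod_list (map (\<lambda>x. \<zeta> [:-x, 1:]) xs)"
  by (induction xs) (simp_all only: list.map prod_list.Cons prod_list.Nil berkA1_mult berkA1_1)

lemma tendsto_prod_list_map:
  fixes f :: "_ \<Rightarrow> _ \<Rightarrow> real"
  shows "(\<And>x. x \<in> set xs \<Longrightarrow> ((\<lambda>k. f k x) \<longlongrightarrow> L x) F) \<Longrightarrow>
    ((\<lambda>k. prod_list (map (f k) xs)) \<longlongrightarrow> prod_list (map L xs)) F"
  by (induction xs) (auto intro!: tendsto_mult)

text \<open>Since polynomials split into linear factors, approximating the values on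
  finitely many linear polynomials suffices.\<close>
lemma exists_typeI_tendsto:
  assumes \<zeta>: "\<zeta> \<in> berkA1 absv" and "finite G"
  shows "\<exists>s. \<forall>g\<in>G. ((\<lambda>k. typeI absv (s k) g) \<longlongrightarrow> \<zeta> g) sequentially"
proof -
  have "\<forall>g :: 'a poly. \<exists>xs. g = smult (lead_coeff g) (prod_list (map (\<lambda>x. [:-x, 1:]) xs))"
    using poly_splits by blast
  from choice[OF this] obtain xs
    where xs: "\<And>g :: 'a poly. g = smult (lead_coeff g) (prod_list (map (\<lambda>x. [:-x, 1:]) (xs g)))"
      by blast
  define A where "A = (\<Union>g\<in>G. set (xs g))"
  have "finite A" unfolding A_def using \<open>finite G\<close> by blast
  then have "\<forall>k. \<exists>a. \<forall>\<alpha>\<in>A. \<bar>absv (a - \<alpha>) - \<zeta> [:-\<alpha>, 1:]\<bar> < 1 / real (Suc k)"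
    using exists_point_approx_linear_factors[OF \<zeta> \<open>finite A\<close>] by (simp del: of_nat_Suc)
  from choice[OF this] obtain s
    where s: "\<And>k. \<forall>\<alpha>\<in>A. \<bar>absv (s k - \<alpha>) - \<zeta> [:-\<alpha>, 1:]\<bar> < 1 / real (Suc k)" by blast
  have lim: "((\<lambda>k. absv (s k - \<alpha>)) \<longlongrightarrow> \<zeta> [:-\<alpha>, 1:]) sequentially" if "\<alpha> \<in> A" for \<alpha>
  proof (rule LIM_zero_cancel, rule Lim_null_comparison)
    show "\<forall>\<^sub>F k in sequentially. norm (absv (s k - \<alpha>) - \<zeta> [:-\<alpha>, 1:]) \<le> inverse (real (Suc k))"
      using s that by (intro always_eventually allI) (simp add: less_imp_le divide_inverse)
  qed (rule LIMSEQ_inverse_real_of_nat)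
  have "((\<lambda>k. typeI absv (s k) g) \<longlongrightarrow> \<zeta> g) sequentially" if "g \<in> G" for g
  proof -
    have e1: "typeI absv (s k) g
        = absv (lead_coeff g) * prod_list (map (\<lambda>x. absv (s k - x)) (xs g))"
      for k
      unfolding typeI_def by (subst xs[of g]) (simp add: absv_poly_linear_factors)
    have e2: "\<zeta> g = absv (lead_coeff g) * prod_list (map (\<lambda>x. \<zeta> [:-x, 1:]) (xs g))"
      by (subst xs[of g]) (simp add: \<zeta> berkA1_linear_factors)
    have "((\<lambda>k. prod_list (map (\<lambda>x. absv (s k - x)) (xs g)))
        \<longlongrightarrow> prod_list (map (\<lambda>x. \<zeta> [:-x, 1:]) (xs g))) sequentially"
      by (rule tendsto_prod_list_map) (use that lim in \<open>auto simp: A_def\<close>)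
    then show ?thesis unfolding e1 e2 by (rule tendsto_mult_left)
  qed
  then show ?thesis by blast
qed

lemma openin_berkA1_top_contains_typeI:
  assumes U: "openin (berkA1_top absv) U" and "\<zeta> \<in> U"
  shows "\<exists>a. typeI absv a \<in> U"
proof -
  obtain V where V: "finite {g. V g \<noteq> UNIV}" "\<forall>g. open (V g)" "\<forall>g. \<zeta> g \<in> V g"
      "\<forall>\<xi>\<in>berkA1 absv. (\<forall>g. \<xi> g \<in> V g) \<longrightarrow> \<xi> \<in> U"
    using berkA1_open_contains_box[OF assms] by blast
  have "\<zeta> \<in> berkA1 absv" using openin_berkA1_top_subset[OF U] \<open>\<zeta> \<in> U\<close> by auto
  then obtain s where s: "\<forall>g\<in>{g. V g \<noteq> UNIV}. ((\<lambda>k. typeI absv (s k) g) \<longlongrightarrow> \<zeta> g) sequentially"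
    using exists_typeI_tendsto V(1) by blast
  have "\<forall>g\<in>{g. V g \<noteq> UNIV}. eventually (\<lambda>k. typeI absv (s k) g \<in> V g) sequentially"
    using s V(2,3) topological_tendstoD by blast
  then have "eventually (\<lambda>k. \<forall>g\<in>{g. V g \<noteq> UNIV}. typeI absv (s k) g \<in> V g) sequentially"
    by (rule eventually_ball_finite[OF V(1)])
  then obtain k where k: "\<forall>g\<in>{g. V g \<noteq> UNIV}. typeI absv (s k) g \<in> V g"
    using eventually_sequentially by auto
  have "typeI absv (s k) g \<in> V g" for g by (cases "V g = UNIV") (use k in auto)
  then show ?thesis using V(4) typeI_in_berkA1 by blast
qed

lemma berkP1_subset_closedin:
  assumes "closedin berkP1_top S" "None \<in> S" "\<And>a. Some (typeI absv a) \<in> S"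
  shows "berkP1 absv \<subseteq> S"
proof
  fix y assume y: "y \<in> berkP1 absv"
  show "y \<in> S"
  proof (rule ccontr)
    assume "y \<notin> S"
    then obtain \<zeta> where \<zeta>: "y = Some \<zeta>" using assms(2) by (cases y) auto
    have "openin berkP1_top (berkP1 absv - S)" using assms(1) unfolding closedin_def by simp
    then have "openin (berkA1_top absv) (Some -` (berkP1 absv - S))"
      unfolding openin_berkP1_top berkP1_open_def by auto
    moreover have "\<zeta> \<in> Some -` (berkP1 absv - S)" using y \<zeta> \<open>y \<notin> S\<close> by simp
    ultimately obtain a where "typeI absv a \<in> Some -` (berkP1 absv - S)"
      using openin_berkA1_top_contains_typeI by blast
    then show False using assms(3) by simp
  qed
qed

lemma berk_disk_factor_le:
  assumes "\<xi> \<in> berk_disk b r" "r \<le> 1"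
  shows "\<xi> ([:-b, 1:] * h) \<le> r * coeff_bound h (max 1 (absv b))"
proof -
  have \<xi>: "\<xi> \<in> berkA1 absv" "\<xi> [:-b, 1:] \<le> r" using assms(1) unfolding berk_disk_def by auto
  then have "\<xi> [:0, 1:] \<le> max 1 (absv b)" using berkA1_X_le[OF \<xi>(1), of b] assms(2) by linarith
  then have "\<xi> h \<le> coeff_bound h (max 1 (absv b))" by (rule berkA1_le_coeff_bound[OF \<xi>(1)])
  moreover have "\<xi> ([:-b, 1:] * h) = \<xi> [:-b, 1:] * \<xi> h" by (rule berkA1_mult[OF \<xi>(1)])
  moreover have "0 \<le> r" using \<xi>(2) berkA1_nonneg[OF \<xi>(1), of "[:-b, 1:]"] by linarith
  ultimately show ?thesis using \<xi>(2) mult_mono[OF \<xi>(2)] berkA1_nonneg[OF \<xi>(1), of h] by simp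
qed

lemma eventually_berk_disk_eval_in:
  assumes "open V" "typeI absv b g \<in> V"
  shows "eventually (\<lambda>r. \<forall>\<xi>\<in>berk_disk b r. \<xi> g \<in> V) (at_right 0)"
proof -
  define h where "h = synthetic_div g b"
  define gb where "gb = poly g b"
  have g: "g = [:-b, 1:] * h + [:gb:]"
    unfolding h_def gb_def by (rule synthetic_div_correct'[symmetric])
  define C where "C = coeff_bound h (max 1 (absv b))"
  have "0 \<le> C" unfolding C_def by (simp add: coeff_bound_nonneg)
  obtain \<epsilon> where \<epsilon>: "0 < \<epsilon>" "ball (absv gb) \<epsilon> \<subseteq> V"
    using assms open_contains_ball unfolding typeI_def gb_def by blast
  define \<eta> where "\<eta> = (if gb = 0 then \<epsilon> else absv gb)"
  have "0 < \<eta>" unfolding \<eta>_def using \<epsilon> by simp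
  have "\<xi> g \<in> V" if r: "0 < r" "r < min 1 (\<eta> / (C + 1))" and \<xi>: "\<xi> \<in> berk_disk b r" for r \<xi>
  proof -
    have "r * (C + 1) < \<eta>" using r \<open>0 \<le> C\<close> by (simp add: less_divide_eq)
    moreover have "\<xi> ([:-b, 1:] * h) \<le> r * C"
      unfolding C_def by (rule berk_disk_factor_le[OF \<xi>]) (use r in linarith)
    ultimately have lt: "\<xi> ([:-b, 1:] * h) < \<eta>" using r by (simp add: algebra_simps)
    have \<xi>A: "\<xi> \<in> berkA1 absv" using \<xi> unfolding berk_disk_def by simp
    show ?thesis
    proof (cases "gb = 0")
      case True
      then have "\<xi> g = \<xi> ([:-b, 1:] * h)" by (subst g) simp
      then have "\<xi> g \<in> ball (absv gb) \<epsilon>"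
        using True lt berkA1_nonneg[OF \<xi>A, of g] unfolding \<eta>_def by (simp add: dist_real_def)
      then show ?thesis using \<epsilon> by blast
    next
      case False
      then have "\<xi> ([:-b, 1:] * h) < \<xi> [:gb:]" using lt \<xi>A unfolding \<eta>_def by simp
      then have "\<xi> g = absv gb" by (subst g) (simp add: berkA1_add_eq_right[OF \<xi>A] \<xi>A)
      then show ?thesis using assms(2) unfolding typeI_def gb_def by simp
    qed
  qed
  moreover have "0 < min 1 (\<eta> / (C + 1))" using \<open>0 < \<eta>\<close> \<open>0 \<le> C\<close> by simp
  ultimately show ?thesis unfolding eventually_at_right_field by blast
qed

lemma eventually_berk_disk_subset:
  assumes U: "openin (berkA1_top absv) U" and "typeI absv b \<in> U"
  shows "eventually (\<lambda>r. berk_disk b r \<subseteq> U) (at_right 0)"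
proof -
  obtain V where V: "finite {g. V g \<noteq> UNIV}" "\<forall>g. open (V g)" "\<forall>g. typeI absv b g \<in> V g"
      "\<forall>\<xi>\<in>berkA1 absv. (\<forall>g. \<xi> g \<in> V g) \<longrightarrow> \<xi> \<in> U"
    using berkA1_open_contains_box[OF assms] by blast
  have "eventually (\<lambda>r. \<forall>g\<in>{g. V g \<noteq> UNIV}. \<forall>\<xi>\<in>berk_disk b r. \<xi> g \<in> V g) (at_right 0)"
    using V(2,3) by (intro eventually_ball_finite[OF V(1)] ballI eventually_berk_disk_eval_in) auto
  then show ?thesis
  proof (rule eventually_mono)
    fix r assume r: "\<forall>g\<in>{g. V g \<noteq> UNIV}. \<forall>\<xi>\<in>berk_disk b r. \<xi> g \<in> V g"
    have "\<xi> g \<in> V g" if "\<xi> \<in> berk_disk b r" for \<xi> g by (cases "V g = UNIV") (use r that in auto)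
    then show "berk_disk b r \<subseteq> U" using V(4) unfolding berk_disk_def by blast
  qed
qed

end

section \<open>Rational maps\<close>

lemma poly_hom_compose:
  assumes "poly Q a \<noteq> 0"
  shows "poly (hom_compose g P Q) a = poly Q a ^ degree g * poly g (poly P a / poly Q a)"
proof -
  have "poly (hom_compose g P Q) a
      = (\<Sum>i\<le>degree g. coeff g i * (poly P a ^ i * poly Q a ^ (degree g - i)))"
    unfolding hom_compose_def by (simp add: poly_sum)
  also have "\<dots> = (\<Sum>i\<le>degree g. poly Q a ^ degree g * (coeff g i * (poly P a / poly Q a) ^ i))"
  proof (rule sum.cong)
    fix i assume "i \<in> {..degree g}"
    then have "i \<le> degree g" by simp
    then have "poly Q a ^ degree g = poly Q a ^ (degree g - i) * poly Q a ^ i"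
      by (simp add: power_add[symmetric])
    then show "coeff g i * (poly P a ^ i * poly Q a ^ (degree g - i))
        = poly Q a ^ degree g * (coeff g i * (poly P a / poly Q a) ^ i)"
      using assms by (simp add: power_divide field_simps)
  qed simp
  also have "\<dots> = poly Q a ^ degree g * poly g (poly P a / poly Q a)"
    by (simp add: poly_altdef sum_distrib_left)
  finally show ?thesis .
qed

lemma poly_eq_cofinite:
  fixes p q :: "'a::{idom, ring_char_0} poly"
  assumes "finite S" "\<And>a. a \<notin> S \<Longrightarrow> poly p a = poly q a"
  shows "p = q"
proof (rule ccontr)
  assume "p \<noteq> q"
  then have "finite {x. poly (p - q) x = 0}" by (intro poly_roots_finite) simp
  moreover have "UNIV - S \<subseteq> {x. poly (p - q) x = 0}" using assms(2) by auto
  ultimately have "finite (UNIV :: 'a set)"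
    using assms(1) by (metis Diff_infinite_finite finite_subset)
  then show False using infinite_UNIV_char_0 by blast
qed

lemma hom_compose_mult:
  fixes P Q :: "'a::field_char_0 poly"
  assumes "Q \<noteq> 0" "g \<noteq> 0" "h \<noteq> 0"
  shows "hom_compose (g * h) P Q = hom_compose g P Q * hom_compose h P Q"
proof (rule poly_eq_cofinite)
  show "finite {a. poly Q a = 0}" using assms(1) by (rule poly_roots_finite)
  fix a assume "a \<notin> {a. poly Q a = 0}"
  then show "poly (hom_compose (g * h) P Q) a = poly (hom_compose g P Q * hom_compose h P Q) a"
    using assms(2,3) by (simp add: poly_hom_compose degree_mult_eq power_add)
qed

lemma hom_compose_add:
  fixes P Q :: "'a::field_char_0 poly"
  assumes "Q \<noteq> 0" "degree g \<le> d" "degree h \<le> d"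
  shows "Q ^ (d - degree (g + h)) * hom_compose (g + h) P Q =
         Q ^ (d - degree g) * hom_compose g P Q + Q ^ (d - degree h) * hom_compose h P Q"
proof (rule poly_eq_cofinite)
  show "finite {a. poly Q a = 0}" using assms(1) by (rule poly_roots_finite)
  fix a assume "a \<notin> {a. poly Q a = 0}"
  moreover have
    "poly (Q ^ (d - degree k) * hom_compose k P Q) a = poly Q a ^ d * poly k (poly P a / poly Q a)"
    if "degree k \<le> d" "poly Q a \<noteq> 0" for k
    using that by (simp add: poly_hom_compose mult.assoc[symmetric] power_add[symmetric])
  moreover have "degree (g + h) \<le> d" using assms(2,3) degree_add_le by blast
  ultimately show "poly (Q ^ (d - degree (g + h)) * hom_compose (g + h) P Q) a =
      poly (Q ^ (d - degree g) * hom_compose g P Q + Q ^ (d - degree h) * hom_compose h P Q) a"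
    using assms(2,3) by (simp add: algebra_simps)
qed

definition berk_image :: "'a::field poly \<Rightarrow> 'a poly \<Rightarrow> ('a poly \<Rightarrow> real) \<Rightarrow> ('a poly \<Rightarrow> real)" where
  "berk_image P Q \<zeta> = (\<lambda>g. \<zeta> (hom_compose g P Q) / \<zeta> Q ^ degree g)"

lemma in_berk_julia_if_iterates_cover:
  assumes "x \<in> berkP1 absv"
    and "\<And>V. berkP1_open absv V \<Longrightarrow> x \<in> V \<Longrightarrow> \<exists>n\<ge>1. berkP1 absv \<subseteq> (berk_map absv P Q ^^ n) ` V"
  shows "x \<in> berk_julia absv P Q"
proof -
  have "finite (berkP1 absv - (\<Union>n\<in>{1..}. (berk_map absv P Q ^^ n) ` V))"
    if V: "berkP1_open absv V" "x \<in> V" for V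
  proof -
    obtain n where "1 \<le> n" "berkP1 absv \<subseteq> (berk_map absv P Q ^^ n) ` V"
      using assms(2)[OF V] by blast
    moreover have "(berk_map absv P Q ^^ n) ` V \<subseteq> (\<Union>n\<in>{1..}. (berk_map absv P Q ^^ n) ` V)"
      using \<open>1 \<le> n\<close> by (intro UN_upper) simp
    ultimately have "berkP1 absv - (\<Union>n\<in>{1..}. (berk_map absv P Q ^^ n) ` V) = {}" by blast
    then show ?thesis by (simp only: finite.emptyI)
  qed
  then show ?thesis unfolding berk_julia_def using assms(1) by blast
qed

lemma eventually_chordal_at:
  "eventually P (chordal_at absv x) \<longleftrightarrow> (\<exists>e>0. \<forall>y. y \<noteq> x \<and> chordal absv x y < e \<longrightarrow> P y)"
proof -
  have "eventually P (chordal_at absv x) \<longleftrightarrow>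
      (\<exists>e\<in>{0<..}. eventually P (principal {y. y \<noteq> x \<and> chordal absv x y < e}))"
    unfolding chordal_at_def
  proof (rule eventually_INF_base)
    fix a b :: real assume "a \<in> {0<..}" "b \<in> {0<..}"
    then show "\<exists>e\<in>{0<..}. principal {y. y \<noteq> x \<and> chordal absv x y < e}
        \<le> inf (principal {y. y \<noteq> x \<and> chordal absv x y < a})
            (principal {y. y \<noteq> x \<and> chordal absv x y < b})"
      by (intro bexI[of _ "min a b"]) auto
  qed auto
  then show ?thesis by (simp add: eventually_principal Bex_def)
qed

context nonarch_field
begin

lemma chordal_Some_Some_le_1:
  "absv x \<le> 1 \<Longrightarrow> absv y \<le> 1 \<Longrightarrow> chordal absv (Some x) (Some y) = absv (x - y)"
  unfolding chordal_def by simp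

lemma chordal_Some_less_1:
  assumes "absv b \<le> 1" "chordal absv (Some b) y < 1"
  obtains z where "y = Some z" "absv z \<le> 1" "chordal absv (Some b) y = absv (z - b)"
proof (cases y)
  case None
  then show ?thesis using assms unfolding chordal_def by simp
next
  case (Some z)
  have "absv z \<le> 1"
  proof (rule ccontr)
    assume "\<not> absv z \<le> 1"
    then have "absv (b - z) = absv z" using assms(1) by (intro absv_diff_eq_right) simp
    moreover have "z \<noteq> 0" using \<open>\<not> absv z \<le> 1\<close> by auto
    ultimately have "chordal absv (Some b) y = 1"
      using Some assms(1) \<open>\<not> absv z \<le> 1\<close> unfolding chordal_def by simp
    then show False using assms(2) by simp
  qed
  then show ?thesis
    using that Some assms(1) by (simp add: chordal_Some_Some_le_1 absv_minus_commute)
qed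

end

context Cv_residue_char_0
begin

lemma berk_image_in_berkA1:
  assumes \<zeta>: "\<zeta> \<in> berkA1 absv" and "\<zeta> Q \<noteq> 0"
  shows "berk_image P Q \<zeta> \<in> berkA1 absv"
  unfolding berkA1_def berk_seminorm_def mem_Collect_eq
proof (intro conjI allI)
  have "Q \<noteq> 0" "0 < \<zeta> Q" using assms berkA1_nonneg[OF \<zeta>, of Q] by (auto simp: less_le)
  fix p r :: "'a poly"
  show "berk_image P Q \<zeta> [:a:] = absv a" for a
    unfolding berk_image_def hom_compose_def using \<zeta> by simp
  show "0 \<le> berk_image P Q \<zeta> p" unfolding berk_image_def using \<zeta> by simp
  show "berk_image P Q \<zeta> (p * r) = berk_image P Q \<zeta> p * berk_image P Q \<zeta> r"
  proof (cases "p = 0 \<or> r = 0")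
    case True
    have "hom_compose 0 P Q = 0" unfolding hom_compose_def by simp
    then show ?thesis using True \<zeta> unfolding berk_image_def by auto
  next
    case False
    then show ?thesis using \<zeta> \<open>Q \<noteq> 0\<close> unfolding berk_image_def
      by (simp add: hom_compose_mult degree_mult_eq power_add)
  qed
  define d where "d = max (degree p) (degree r)"
  have d: "degree p \<le> d" "degree r \<le> d" unfolding d_def by auto
  then have d3: "degree (p + r) \<le> d" by (rule degree_add_le)
  have scale: "\<zeta> (Q ^ (d - degree k) * hom_compose k P Q) = \<zeta> Q ^ d * berk_image P Q \<zeta> k"
    if "degree k \<le> d" for k
    using that \<open>0 < \<zeta> Q\<close> \<zeta> by (simp add: berk_image_def field_simps power_add[symmetric])
  have "\<zeta> Q ^ d * berk_image P Q \<zeta> (p + r)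
      \<le> max (\<zeta> (Q ^ (d - degree p) * hom_compose p P Q))
            (\<zeta> (Q ^ (d - degree r) * hom_compose r P Q))"
    using scale[OF d3] hom_compose_add[OF \<open>Q \<noteq> 0\<close> d(1,2), of P] berkA1_add_le_max[OF \<zeta>] by metis
  also have "\<dots> = \<zeta> Q ^ d * max (berk_image P Q \<zeta> p) (berk_image P Q \<zeta> r)"
    using scale[OF d(1)] scale[OF d(2)] \<open>0 < \<zeta> Q\<close> by (simp add: max_mult_distrib_left)
  finally show "berk_image P Q \<zeta> (p + r) \<le> max (berk_image P Q \<zeta> p) (berk_image P Q \<zeta> r)"
    using \<open>0 < \<zeta> Q\<close> by simp
qed

lemma berk_map_in_berkP1: "x \<in> berkP1 absv \<Longrightarrow> berk_map absv P Q x \<in> berkP1 absv"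
  using berk_image_in_berkA1[unfolded berk_image_def]
  by (cases x) (auto simp: berkP1_def berk_map_def typeI_in_berkA1)

lemma continuous_map_berk_image:
  "continuous_map (subtopology (berkA1_top absv) {\<zeta> \<in> berkA1 absv. \<zeta> Q \<noteq> 0}) (berkA1_top absv)
     (berk_image P Q)"
proof -
  let ?S = "{\<zeta> \<in> berkA1 absv. \<zeta> Q \<noteq> 0}"
  have sub: "subtopology (berkA1_top absv) ?S = subtopology pointwise_top ?S"
    unfolding berkA1_top_eq subtopology_subtopology by (simp add: Int_absorb1 subset_iff)
  have "continuous_map (subtopology pointwise_top ?S) euclideanreal (\<lambda>\<zeta>. berk_image P Q \<zeta> g)" for g
    unfolding berk_image_def
    by (intro continuous_map_real_divide continuous_map_real_pow
        continuous_map_from_subtopology[OF continuous_map_pointwise_eval]) auto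
  then have "continuous_map (subtopology pointwise_top ?S) (subtopology pointwise_top (berkA1 absv))
      (berk_image P Q)"
    by (auto simp: continuous_map_in_subtopology continuous_map_componentwise_UNIV
        berk_image_in_berkA1)
  then show ?thesis unfolding sub unfolding berkA1_top_eq .
qed

lemma openin_berk_image_preimage:
  assumes "openin (berkA1_top absv) U"
  shows "openin (berkA1_top absv) {\<zeta> \<in> berkA1 absv. \<zeta> Q \<noteq> 0 \<and> berk_image P Q \<zeta> \<in> U}"
proof -
  have "openin (berkA1_top absv) {\<zeta> \<in> berkA1 absv. \<zeta> Q \<in> - {0}}"
    by (rule openin_berkA1_top_basic) (simp add: open_Compl)
  moreover have "openin (subtopology (berkA1_top absv) {\<zeta> \<in> berkA1 absv. \<zeta> Q \<noteq> 0})
      {\<zeta> \<in> {\<zeta> \<in> berkA1 absv. \<zeta> Q \<noteq> 0}. berk_image P Q \<zeta> \<in> U}"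
    using openin_continuous_map_preimage[OF continuous_map_berk_image assms] by simp
  ultimately show ?thesis using openin_trans_full by fastforce
qed

lemma compactin_bdd_X:
  assumes "compactin (berkA1_top absv) C"
  shows "\<exists>B. \<forall>\<zeta>\<in>C. \<zeta> [:0, 1:] \<le> B"
proof -
  have "continuous_map (berkA1_top absv) euclideanreal (\<lambda>\<zeta>. \<zeta> [:0, 1:])"
    unfolding berkA1_top_eq
      by (rule continuous_map_from_subtopology[OF continuous_map_pointwise_eval])
  from image_compactin[OF assms this] have "bounded ((\<lambda>\<zeta>. \<zeta> [:0, 1:]) ` C)"
    by (simp add: compact_imp_bounded)
  then show ?thesis unfolding bounded_real by (metis abs_le_D1 imageI)
qed

lemma chordal_at_Some_nontrivial: "chordal_at absv (Some b) \<noteq> bot"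
proof
  assume "chordal_at absv (Some b) = bot"
  then have "eventually (\<lambda>_. False) (chordal_at absv (Some b))" by simp
  then obtain e where e: "0 < e" "\<forall>y. y \<noteq> Some b \<and> chordal absv (Some b) y < e \<longrightarrow> False"
    unfolding eventually_chordal_at by blast
  obtain t where t: "0 < absv t" "absv t < e" using exists_absv_less[OF e(1)] by blast
  have "1 \<le> max 1 (absv b) * max 1 (absv (b + t))"
    using mult_mono[of 1 "max 1 (absv b)" 1 "max 1 (absv (b + t))"] by simp
  then have "chordal absv (Some b) (Some (b + t)) \<le> absv t"
    using t(1) unfolding chordal_def by (simp add: divide_le_eq)
  moreover have "Some (b + t) \<noteq> Some b" using t(1) by simp
  ultimately show False using e(2) t(2) by (meson le_less_trans)
qed

end

section \<open>The map z + 1 + c + c/z\<close>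

locale julia_example = Cv_residue_char_0 absv for absv :: "'a::field_char_0 \<Rightarrow> real" +
  fixes c :: 'a
  assumes c_pos: "0 < absv c" and c_less_1: "absv c < 1"
begin

abbreviation "Pc \<equiv> [:c, 1 + c, 1:]"

abbreviation "Qc \<equiv> [:0, 1:] :: 'a poly"

lemma c_nonzero[simp]: "c \<noteq> 0" using c_pos by simp

definition fc :: "'a \<Rightarrow> 'a" where "fc z = poly Pc z / poly Qc z"

lemma fc_eq: "z \<noteq> 0 \<Longrightarrow> fc z = z + 1 + c + c / z"
  unfolding fc_def by (simp add: field_simps)

lemma fc_diff: assumes "x \<noteq> 0" "x' \<noteq> 0"
  shows "fc x - fc x' = (x - x') * (1 - c / (x * x'))"
  using assms by (simp add: fc_eq field_simps)

lemma fc_preimage: "\<exists>z. z \<noteq> 0 \<and> fc z = y"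
proof -
  have "degree [:c, 1 + c - y, 1:] = 2" by simp
  then obtain z where z: "poly [:c, 1 + c - y, 1:] z = 0"
    using has_root[of "[:c, 1 + c - y, 1:]"] by auto
  have z0: "z \<noteq> 0" using z by auto
  have "fc z = y" using z z0 unfolding fc_def by (simp add: field_simps)
  then show ?thesis using z0 by blast
qed

lemma fc_preimage_pair: "\<exists>z w. z \<noteq> 0 \<and> w \<noteq> 0 \<and> fc z = y \<and> fc w = y \<and> z * w = c \<and> z + w = y - 1 - c"
proof -
  obtain z where z: "z \<noteq> 0" "fc z = y" using fc_preimage by blast
  define w where "w = c / z"
  have w0: "w \<noteq> 0" unfolding w_def using z by simp
  have zw: "z * w = c" unfolding w_def using z by simp
  have sum: "z + w = y - 1 - c" using z fc_eq[of z] unfolding w_def by (auto simp: field_simps)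
  have "fc w = y" using fc_eq[OF w0] sum zw z(1) unfolding w_def by (simp add: field_simps)
  then show ?thesis using z w0 zw sum by blast
qed

text \<open>The preimages of y are the roots of z(f(z) - y) = z^2 - (y - 1 - c) z + c.\<close>
lemma fc_preimages_factor:
  assumes "x \<noteq> 0" "z1 + z2 = y - 1 - c" "z1 * z2 = c"
  shows "(x - z1) * (x - z2) = x * (fc x - y)"
proof -
  have "(x - z1) * (x - z2) = x * x - (z1 + z2) * x + z1 * z2" by (simp add: algebra_simps)
  also have "\<dots> = x * x - (y - 1 - c) * x + c" using assms(2,3) by simp
  also have "\<dots> = x * (fc x - y)" using fc_eq[OF assms(1)] assms(1) by (simp add: field_simps)
  finally show ?thesis .
qed

lemma fc_preimages_split: assumes "absv (y - 1 - c) = 1"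
  shows "\<exists>z1 z2. fc z1 = y \<and> fc z2 = y \<and> absv z1 = 1 \<and> absv z2 = absv c \<and>
    z1 + z2 = y - 1 - c \<and> z1 \<noteq> 0 \<and> z2 \<noteq> 0 \<and> z1 * z2 = c"
proof -
  obtain z w where zw: "z \<noteq> 0" "w \<noteq> 0" "fc z = y" "fc w = y" "z * w = c" "z + w = y - 1 - c"
    using fc_preimage_pair by blast
  have prod: "absv z * absv w = absv c" using zw(5) by (metis absv_mult)
  show ?thesis
  proof (cases "absv z < 1")
    case True
    have "absv w = 1"
    proof -
      have "absv ((y - 1 - c) - z) = absv (y - 1 - c)"
        using True assms by (intro absv_diff_eq_left) simp
      moreover have "w = (y - 1 - c) - z" using zw(6) by (simp add: algebra_simps)
      ultimately show ?thesis using assms by simp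
    qed
    then have "absv z = absv c" using prod by simp
    then show ?thesis
      using zw \<open>absv w = 1\<close> by (intro exI[of _ w] exI[of _ z]) (auto simp: add.commute mult.commute)
  next
    case False
    then have "absv w \<le> absv c" using prod c_pos absv_nonneg[of w]
      by (metis mult_le_cancel_right1 not_less)
    then have wl: "absv w < 1" using c_less_1 by linarith
    have "absv ((y - 1 - c) - w) = absv (y - 1 - c)"
      using wl assms by (intro absv_diff_eq_left) simp
    moreover have "z = (y - 1 - c) - w" using zw(6) by (simp add: algebra_simps)
    ultimately have "absv z = 1" using assms by simp
    then have "absv w = absv c" using prod by simp
    then show ?thesis using zw \<open>absv z = 1\<close> by (intro exI[of _ z] exI[of _ w]) auto
  qed
qed

lemma fc_preimage_small: "\<exists>z. z \<noteq> 0 \<and> absv z < 1 \<and> fc z = y"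
proof -
  obtain z w where zw: "z \<noteq> 0" "w \<noteq> 0" "fc z = y" "fc w = y" "z * w = c"
    using fc_preimage_pair by blast
  have prod: "absv z * absv w = absv c" using zw(5) by (metis absv_mult)
  show ?thesis
  proof (cases "absv z < 1")
    case True then show ?thesis using zw by blast
  next
    case False
    then have "absv w \<le> absv c" using prod c_pos absv_nonneg[of w]
      by (metis mult_le_cancel_right1 not_less)
    then show ?thesis using zw c_less_1 by (intro exI[of _ w]) auto
  qed
qed

lemma fc_preimage_small_of_near_minus_1:
  assumes "absv (y + 1) < 1"
  shows "\<exists>z. z \<noteq> 0 \<and> absv z \<le> absv c \<and> fc z = y"
proof -
  have eq: "y - 1 - c = (y + 1 - c) - 2" by simp
  have l: "absv (y + 1 - c) < 1" using assms c_less_1 absv_diff_le_max[of "y + 1" c] by simp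
  have "absv ((y + 1 - c) - 2) = absv (2::'a)" by (rule absv_diff_eq_right) (use l in simp)
  then have "absv (y - 1 - c) = 1" unfolding eq by simp
  from fc_preimages_split[OF this] show ?thesis by auto
qed

lemma fc_preimage_near_minus_1: assumes "absv y < 1" shows "\<exists>z. absv (z + 1) < 1 \<and> fc z = y"
proof -
  have eq: "y - 1 - c = (y - c) - 1" by simp
  have l: "absv (y - c) < 1" using assms c_less_1 absv_diff_le_max[of y c] by simp
  have "absv ((y - c) - 1) = absv (1::'a)" by (rule absv_diff_eq_right) (use l in simp)
  then have "absv (y - 1 - c) = 1" unfolding eq by simp
  from fc_preimages_split[OF this]
  obtain z1 z2 where z: "fc z1 = y" "absv z2 = absv c" "z1 + z2 = y - 1 - c"
    by blast
  have e: "z1 + 1 = (y - c) + (- z2)" using z(3) by (simp add: algebra_simps)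
  have "absv ((y - c) + (- z2)) < 1" using l z(2) c_less_1 by (intro absv_add_less) auto
  then have "absv (z1 + 1) < 1" unfolding e .
  then show ?thesis using z(1) by blast
qed

lemma fc_iterate_small_disk_covers:
  "\<exists>z. absv z \<le> absv c \<and> (\<forall>j<3. (fc ^^ j) z \<noteq> 0) \<and> (fc ^^ 3) z = w"
proof -
  obtain z3 where z3: "z3 \<noteq> 0" "absv z3 < 1" "fc z3 = w" using fc_preimage_small by blast
  obtain z2 where z2: "absv (z2 + 1) < 1" "fc z2 = z3"
    using fc_preimage_near_minus_1[OF z3(2)] by blast
  then have "z2 \<noteq> 0" by auto
  obtain z1 where z1: "z1 \<noteq> 0" "absv z1 \<le> absv c" "fc z1 = z2"
    using fc_preimage_small_of_near_minus_1[OF z2(1)] by blast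
  have "(fc ^^ j) z1 \<noteq> 0" if "j < 3" for j
    using that z1 z2 z3 \<open>z2 \<noteq> 0\<close> by (auto simp: numeral_3_eq_3 less_Suc_eq)
  then show ?thesis using z1 z2 z3 by (intro exI[of _ z1]) (auto simp: numeral_3_eq_3)
qed

lemma fc_iterate_small_disk_hits_pole:
  "\<exists>z. absv z \<le> absv c \<and> (\<forall>j<2. (fc ^^ j) z \<noteq> 0) \<and> (fc ^^ 2) z = 0"
proof -
  obtain z2 where z2: "absv (z2 + 1) < 1" "fc z2 = 0" using fc_preimage_near_minus_1[of 0] by auto
  then have "z2 \<noteq> 0" by auto
  obtain z1 where z1: "z1 \<noteq> 0" "absv z1 \<le> absv c" "fc z1 = z2"
    using fc_preimage_small_of_near_minus_1[OF z2(1)] by blast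
  have "(fc ^^ j) z1 \<noteq> 0" if "j < 2" for j
    using that z1 \<open>z2 \<noteq> 0\<close> by (auto simp: numeral_2_eq_2 less_Suc_eq)
  then show ?thesis using z1 z2 by (intro exI[of _ z1]) (auto simp: numeral_2_eq_2)
qed

lemma rat_map_Some: "z \<noteq> 0 \<Longrightarrow> rat_map Pc Qc (Some z) = Some (fc z)"
  unfolding rat_map_def fc_def by simp

lemma rat_map_iter: "(\<forall>j<n. (fc ^^ j) z \<noteq> 0) \<Longrightarrow>
   (rat_map Pc Qc ^^ n) (Some z) = Some ((fc ^^ n) z)"
  by (induction n) (auto simp: rat_map_Some)

lemma berk_map_typeI: assumes "a \<noteq> 0"
  shows "berk_map absv Pc Qc (Some (typeI absv a)) = Some (typeI absv (fc a))"
proof -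
  have q: "typeI absv a Qc \<noteq> 0" using assms unfolding typeI_def by simp
  have "(\<lambda>g. typeI absv a (hom_compose g Pc Qc) / typeI absv a Qc ^ degree g) = typeI absv (fc a)"
  proof
    fix g :: "'a poly"
    have "typeI absv a (hom_compose g Pc Qc) = absv a ^ degree g * absv (poly g (fc a))"
      unfolding typeI_def using poly_hom_compose[of Qc a g Pc] assms by (simp add: fc_def)
    then show "typeI absv a (hom_compose g Pc Qc) / typeI absv a Qc ^ degree g
        = typeI absv (fc a) g"
      using assms unfolding typeI_def by simp
  qed
  then show ?thesis using q unfolding berk_map_def by simp
qed

lemma berk_map_typeI_0: "berk_map absv Pc Qc (Some (typeI absv 0)) = None"
  unfolding berk_map_def typeI_def by simp

lemma berk_map_iter: "(\<forall>j<n. (fc ^^ j) z \<noteq> 0) \<Longrightarrow>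
   (berk_map absv Pc Qc ^^ n) (Some (typeI absv z)) = Some (typeI absv ((fc ^^ n) z))"
  by (induction n) (auto simp: berk_map_typeI)

lemma berk_image_X:
  assumes \<zeta>: "\<zeta> \<in> berkA1 absv"
  shows "\<zeta> [:0, 1:] < absv c \<Longrightarrow> berk_image Pc Qc \<zeta> [:0, 1:] = absv c / \<zeta> [:0, 1:]"
    and "1 < \<zeta> [:0, 1:] \<Longrightarrow> berk_image Pc Qc \<zeta> [:0, 1:] = \<zeta> [:0, 1:]"
proof -
  have "berk_image Pc Qc \<zeta> [:0, 1:] = \<zeta> Pc / \<zeta> [:0, 1:]"
    unfolding berk_image_def hom_compose_def by (simp add: atMost_Suc)
  moreover have "Pc = [:c, 1:] * [:1, 1:]" by (simp add: algebra_simps)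
  ultimately have image: "berk_image Pc Qc \<zeta> [:0, 1:] = \<zeta> [:c, 1:] * \<zeta> [:1, 1:] / \<zeta> [:0, 1:]"
    using berkA1_mult[OF \<zeta>] by metis
  have X: "[:a, 1:] = [:0, 1:] + [:a:]" "[:a, 1:] = [:a:] + [:0, 1:]" for a :: 'a by simp_all
  show "berk_image Pc Qc \<zeta> [:0, 1:] = absv c / \<zeta> [:0, 1:]" if "\<zeta> [:0, 1:] < absv c"
    using berkA1_add_eq_right[OF \<zeta>, of "[:0, 1:]" "[:c:]"]
      berkA1_add_eq_right[OF \<zeta>, of "[:0, 1:]" "[:1:]"]
      that c_less_1 \<zeta> unfolding image X(1)[of c] X(1)[of 1] by simp
  show "berk_image Pc Qc \<zeta> [:0, 1:] = \<zeta> [:0, 1:]" if "1 < \<zeta> [:0, 1:]"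
    using berkA1_add_eq_right[OF \<zeta>, of "[:c:]" "[:0, 1:]"]
      berkA1_add_eq_right[OF \<zeta>, of "[:1:]" "[:0, 1:]"]
      that c_less_1 \<zeta> unfolding image X(2)[of c] X(2)[of 1] by simp
qed

text \<open>Near 0 the map sends seminorms towards infinity, and for large seminorms it is
  keeps its value at T; this makes the preimage of a neighbourhood of infinity a
  neighbourhood of infinity.\<close>
lemma berk_map_preimage_nbhd_infinity:
  assumes U: "openin (berkA1_top absv) U" and C: "compactin (berkA1_top absv) (berkA1 absv - U)"
  defines "W \<equiv> {\<zeta> \<in> berkA1 absv. \<zeta> Qc = 0 \<or> berk_image Pc Qc \<zeta> \<in> U}"
  shows "openin (berkA1_top absv) W \<and> compactin (berkA1_top absv) (berkA1 absv - W)"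
proof -
  obtain B where B: "\<forall>\<xi>\<in>berkA1 absv - U. \<xi> [:0, 1:] \<le> B" using compactin_bdd_X[OF C] by blast
  define \<epsilon> where "\<epsilon> = absv c / (\<bar>B\<bar> + 1)"
  have "0 < \<epsilon>" "\<epsilon> \<le> absv c" unfolding \<epsilon>_def using c_pos by (auto simp: divide_le_eq)
  have image: "berk_image Pc Qc \<zeta> \<in> berkA1 absv" if "\<zeta> \<in> berkA1 absv" "\<zeta> Qc \<noteq> 0" for \<zeta>
    using berk_image_in_berkA1 that by blast
  have small: "\<zeta> \<in> W" if \<zeta>: "\<zeta> \<in> berkA1 absv" "\<zeta> [:0, 1:] < \<epsilon>" for \<zeta>
  proof (cases "\<zeta> Qc = 0")
    case False
    then have "0 < \<zeta> [:0, 1:]" using berkA1_nonneg[OF \<zeta>(1), of "[:0, 1:]"] by linarith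
    then have "\<bar>B\<bar> + 1 < absv c / \<zeta> [:0, 1:]"
      using \<zeta>(2) c_pos unfolding \<epsilon>_def by (simp add: field_simps)
    moreover have "berk_image Pc Qc \<zeta> [:0, 1:] = absv c / \<zeta> [:0, 1:]"
      using berk_image_X(1)[OF \<zeta>(1)] \<zeta>(2) \<open>\<epsilon> \<le> absv c\<close> by simp
    ultimately have "\<not> berk_image Pc Qc \<zeta> [:0, 1:] \<le> B" by linarith
    then show ?thesis using B image[OF \<zeta>(1) False] \<zeta>(1) unfolding W_def by blast
  qed (use \<zeta> in \<open>simp add: W_def\<close>)
  have W: "W = {\<zeta> \<in> berkA1 absv. \<zeta> [:0, 1:] \<in> {..<\<epsilon>}}
      \<union> {\<zeta> \<in> berkA1 absv. \<zeta> Qc \<noteq> 0 \<and> berk_image Pc Qc \<zeta> \<in> U}"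
    using small \<open>0 < \<epsilon>\<close> unfolding W_def by auto
  have "openin (berkA1_top absv) W"
    unfolding W by (intro openin_Un openin_berkA1_top_basic openin_berk_image_preimage[OF U]) simp
  moreover have "berkA1 absv - W \<subseteq> berk_disk 0 (max 1 B)"
  proof
    fix \<zeta> assume \<zeta>: "\<zeta> \<in> berkA1 absv - W"
    have "\<zeta> [:0, 1:] \<le> max 1 B"
    proof (rule ccontr)
      assume "\<not> \<zeta> [:0, 1:] \<le> max 1 B"
      then have "1 < \<zeta> [:0, 1:]" "B < \<zeta> [:0, 1:]" by auto
      moreover from this have "berk_image Pc Qc \<zeta> [:0, 1:] = \<zeta> [:0, 1:]"
        using berk_image_X(2)[of \<zeta>] \<zeta> by simp
      ultimately have "\<not> berk_image Pc Qc \<zeta> [:0, 1:] \<le> B" by linarith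
      moreover have "\<zeta> Qc \<noteq> 0" using \<open>1 < \<zeta> [:0, 1:]\<close> by auto
      ultimately show False using B \<zeta> image[of \<zeta>] unfolding W_def by blast
    qed
    then show "\<zeta> \<in> berk_disk 0 (max 1 B)" using \<zeta> unfolding berk_disk_def by simp
  qed
  moreover have "closedin (berkA1_top absv) (berkA1 absv - W)"
    using calculation(1) by (metis closedin_diff closedin_topspace topspace_berkA1_top)
  ultimately show ?thesis using closed_compactin[OF compactin_berk_disk] by blast
qed

lemma continuous_map_berk_map: "continuous_map berkP1_top berkP1_top (berk_map absv Pc Qc)"
  unfolding continuous_map_def
proof (intro conjI allI impI)
  show "berk_map absv Pc Qc \<in> topspace berkP1_top \<rightarrow> topspace berkP1_top"
    using berk_map_in_berkP1 by auto
  fix V assume "openin berkP1_top V"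
  then have U: "openin (berkA1_top absv) (Some -` V)"
    and C: "None \<in> V \<Longrightarrow> compactin (berkA1_top absv) (berkA1 absv - Some -` V)"
    unfolding openin_berkP1_top berkP1_open_def by auto
  let ?W = "{x \<in> topspace berkP1_top. berk_map absv Pc Qc x \<in> V}"
  have None: "None \<in> ?W \<longleftrightarrow> None \<in> V" by (simp add: berkP1_def berk_map_def)
  have Some: "Some -` ?W = {\<zeta> \<in> berkA1 absv. (\<zeta> Qc = 0 \<and> None \<in> V) \<or>
      (\<zeta> Qc \<noteq> 0 \<and> berk_image Pc Qc \<zeta> \<in> Some -` V)}"
    by (auto simp: berkP1_def berk_map_def berk_image_def split: if_splits)
  show "openin berkP1_top ?W"
  proof (cases "None \<in> V")
    case True
    then have "Some -` ?W = {\<zeta> \<in> berkA1 absv. \<zeta> Qc = 0 \<or> berk_image Pc Qc \<zeta> \<in> Some -` V}"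
      unfolding Some by auto
    then show ?thesis
      using berk_map_preimage_nbhd_infinity[OF U C[OF True]] None True
      unfolding openin_berkP1_top berkP1_open_def by auto
  next
    case False
    then show ?thesis using openin_berk_image_preimage[OF U] None Some
      unfolding openin_berkP1_top berkP1_open_def by auto
  qed
qed

lemma continuous_map_berk_map_iterate:
  "continuous_map berkP1_top berkP1_top (berk_map absv Pc Qc ^^ n)"
  by (induction n) (auto intro: continuous_map_compose[OF _ continuous_map_berk_map, unfolded o_def]
      simp: continuous_map_id[unfolded id_def])

lemma berk_map_iterate_small_disk_covers:
  assumes "y = None \<or> (\<exists>w. y = Some (typeI absv w))"
  shows "\<exists>z. absv z \<le> absv c \<and> (berk_map absv Pc Qc ^^ 3) (Some (typeI absv z)) = y"
  using assms
proof
  assume "y = None"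
  obtain z where z: "absv z \<le> absv c" "\<forall>j<2. (fc ^^ j) z \<noteq> 0" "(fc ^^ 2) z = 0"
    using fc_iterate_small_disk_hits_pole by blast
  then have "(berk_map absv Pc Qc ^^ 2) (Some (typeI absv z)) = Some (typeI absv 0)"
    using berk_map_iter by metis
  moreover have "(berk_map absv Pc Qc ^^ 3) x = berk_map absv Pc Qc ((berk_map absv Pc Qc ^^ 2) x)"
    for x
    by (simp add: numeral_3_eq_3 numeral_2_eq_2)
  ultimately have "(berk_map absv Pc Qc ^^ 3) (Some (typeI absv z)) = None"
    by (simp add: berk_map_typeI_0)
  then show ?thesis using z(1) \<open>y = None\<close> by blast
next
  assume "\<exists>w. y = Some (typeI absv w)"
  then obtain w where "y = Some (typeI absv w)" by blast
  moreover obtain z where "absv z \<le> absv c" "\<forall>j<3. (fc ^^ j) z \<noteq> 0" "(fc ^^ 3) z = w"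
    using fc_iterate_small_disk_covers by blast
  ultimately show ?thesis using berk_map_iter by metis
qed

subsection \<open>Orbits following a prescribed pattern\<close>

text \<open>The prescribed pattern visits the circle |z| = |c| at the return times j = N^k - 1 and
  the unit circle at all other times; on the circle of time j, f scales distances by
  expansion j.\<close>

definition return_base :: nat where "return_base = nat \<lceil>1 / absv c\<rceil> + 1"

lemma return_base_ge: "1 / absv c \<le> real return_base" "return_base \<ge> 2"
proof -
  have "1 / absv c > 1" using c_pos c_less_1 by simp
  then show "1 / absv c \<le> real return_base" "return_base \<ge> 2" unfolding return_base_def by linarith+
qed

definition is_return :: "nat \<Rightarrow> bool" where "is_return j \<longleftrightarrow> (\<exists>k. Suc j = return_base ^ k)"

definition orbit_abs :: "nat \<Rightarrow> real" where "orbit_abs j = (if is_return j then absv c else 1)"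

definition expansion :: "nat \<Rightarrow> real" where "expansion j = (if is_return j then 1 / absv c else 1)"

definition orbit_deriv :: "nat \<Rightarrow> real" where "orbit_deriv n = (\<Prod>j<n. expansion j)"

lemma is_return_0: "is_return 0" unfolding is_return_def by (intro exI[of _ 0]) simp

lemma orbit_abs_bounds: "0 < orbit_abs j" "absv c \<le> orbit_abs j" "orbit_abs j \<le> 1"
  unfolding orbit_abs_def using c_pos c_less_1 by auto

lemma expansion_ge_1: "1 \<le> expansion j" unfolding expansion_def using c_pos c_less_1 by auto

lemma expansion_pos: "0 < expansion j" using expansion_ge_1[of j] by linarith

lemma orbit_abs_expansion: "orbit_abs j * expansion j = 1"
  unfolding orbit_abs_def expansion_def using c_pos by simp

lemma orbit_deriv_0[simp]: "orbit_deriv 0 = 1" unfolding orbit_deriv_def by simp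

lemma orbit_deriv_Suc: "orbit_deriv (Suc n) = orbit_deriv n * expansion n"
  unfolding orbit_deriv_def by simp

lemma orbit_deriv_ge_1: "1 \<le> orbit_deriv n"
proof (induction n)
  case (Suc n) then show ?case
    using mult_mono[of 1 "orbit_deriv n" 1 "expansion n"] expansion_ge_1[of n]
    by (simp add: orbit_deriv_Suc)
qed simp

lemma orbit_deriv_pos: "0 < orbit_deriv n" using orbit_deriv_ge_1[of n] by linarith

lemma orbit_deriv_mono: "m \<le> n \<Longrightarrow> orbit_deriv m \<le> orbit_deriv n"
proof (induction n)
  case (Suc n)
  have "orbit_deriv n \<le> orbit_deriv (Suc n)"
    using expansion_ge_1[of n] orbit_deriv_pos[of n] by (simp add: orbit_deriv_Suc)
  then show ?case using Suc by (cases "m = Suc n") auto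
qed simp

lemma orbit_deriv_exact:
  "\<exists>e. return_base ^ e \<le> Suc n \<and> Suc n < return_base ^ Suc e \<and>
    orbit_deriv (Suc n) = (1 / absv c) ^ Suc e"
proof (induction n)
  case 0
  have "orbit_deriv 1 = 1 / absv c" using is_return_0 by (simp add: orbit_deriv_Suc expansion_def)
  then show ?case using return_base_ge by (intro exI[of _ 0]) auto
next
  case (Suc n)
  then obtain e where
    e: "return_base ^ e \<le> Suc n" "Suc n < return_base ^ Suc e"
      "orbit_deriv (Suc n) = (1 / absv c) ^ Suc e"
    by blast
  show ?case
  proof (cases "Suc (Suc n) = return_base ^ Suc e")
    case True
    then have "is_return (Suc n)" unfolding is_return_def by blast
    then have "orbit_deriv (Suc (Suc n)) = (1 / absv c) ^ Suc (Suc e)"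
      using e(3) by (simp add: orbit_deriv_Suc expansion_def)
    moreover have "return_base ^ Suc e < return_base ^ Suc (Suc e)"
      using return_base_ge by (intro power_strict_increasing) auto
    ultimately show ?thesis using True by (intro exI[of _ "Suc e"]) auto
  next
    case False
    then have lt: "Suc (Suc n) < return_base ^ Suc e" using e(2) by simp
    have "\<not> is_return (Suc n)"
    proof
      assume "is_return (Suc n)"
      then obtain k where k: "Suc (Suc n) = return_base ^ k" unfolding is_return_def by blast
      have N1: "1 < return_base" using return_base_ge by simp
      have "return_base ^ e < return_base ^ k" using k e(1) by simp
      then have "e < k" using power_strict_increasing_iff[OF N1, of e k] by blast
      moreover have "return_base ^ k < return_base ^ Suc e" using k lt by simp
      then have "k < Suc e" using power_strict_increasing_iff[OF N1, of k "Suc e"] by blast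
      ultimately show False by simp
    qed
    then have "orbit_deriv (Suc (Suc n)) = orbit_deriv (Suc n)"
      by (simp add: orbit_deriv_Suc expansion_def)
    then show ?thesis using e lt by (intro exI[of _ e]) auto
  qed
qed

lemma orbit_deriv_le: assumes "1 \<le> n" shows "orbit_deriv n \<le> real n / absv c"
proof -
  obtain m where m: "n = Suc m" using assms by (cases n) auto
  obtain e where e: "return_base ^ e \<le> n" "orbit_deriv n = (1 / absv c) ^ Suc e"
    using orbit_deriv_exact[of m] m by blast
  have "(1 / absv c) ^ e \<le> real return_base ^ e"
    using return_base_ge(1) c_pos by (intro power_mono) auto
  also have "\<dots> \<le> real n" using e(1) by (metis of_nat_le_iff of_nat_power)
  finally have "(1 / absv c) ^ e \<le> real n" .
  then have "(1 / absv c) ^ e / absv c \<le> real n / absv c"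
    using c_pos by (simp add: divide_right_mono)
  moreover have "(1 / absv c) ^ Suc e = (1 / absv c) ^ e / absv c"
    by (simp add: power_Suc2 divide_inverse)
  ultimately show ?thesis using e(2) by simp
qed

lemma orbit_deriv_unbounded: "\<exists>n. B < orbit_deriv n"
proof -
  have "1 < 1 / absv c" using c_pos c_less_1 by simp
  then obtain e where e: "B < (1 / absv c) ^ e" using real_arch_pow by blast
  have "return_base ^ e \<ge> 1" using return_base_ge by simp
  then obtain m where m: "return_base ^ e = Suc m" by (cases "return_base ^ e") auto
  obtain e' where
    e': "return_base ^ e' \<le> Suc m" "Suc m < return_base ^ Suc e'"
      "orbit_deriv (Suc m) = (1 / absv c) ^ Suc e'"
    using orbit_deriv_exact[of m] by blast
  have N1: "1 < return_base" using return_base_ge by simp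
  have "return_base ^ e < return_base ^ Suc e'" using m e'(2) by simp
  then have "e < Suc e'" using power_strict_increasing_iff[OF N1, of e "Suc e'"] by blast
  then have "e \<le> e'" by simp
  then have "(1 / absv c) ^ e \<le> (1 / absv c) ^ Suc e'"
    using \<open>1 < 1 / absv c\<close> by (intro power_increasing) auto
  then show ?thesis using e e'(3) by (intro exI[of _ "Suc m"]) auto
qed

lemma orbit_deriv_nonreturn:
  "\<not> is_return i \<Longrightarrow> \<exists>p<i. is_return p \<and> orbit_deriv i = orbit_deriv p / absv c"
proof (induction i)
  case 0 then show ?case using is_return_0 by simp
next
  case (Suc k)
  show ?case
  proof (cases "is_return k")
    case True then show ?thesis by (intro exI[of _ k]) (simp add: orbit_deriv_Suc expansion_def)
  next
    case False
    then obtain p where "p < k" "is_return p" "orbit_deriv k = orbit_deriv p / absv c"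
      using Suc by blast
    then show ?thesis using False by (intro exI[of _ p]) (simp add: orbit_deriv_Suc expansion_def)
  qed
qed

lemma exists_return_after: "\<exists>m>n. is_return m"
proof -
  have "Suc n < 2 ^ Suc n" by (rule less_exp)
  also have "(2::nat) ^ Suc n \<le> return_base ^ Suc n" using return_base_ge by (intro power_mono) auto
  finally have lt: "Suc n < return_base ^ Suc n" .
  define m where "m = return_base ^ Suc n - 1"
  have "Suc m = return_base ^ Suc n" using lt unfolding m_def by simp
  then have "is_return m" unfolding is_return_def by blast
  moreover have "m > n" using lt unfolding m_def by simp
  ultimately show ?thesis by blast
qed

lemma fc_diff_on_level: assumes "absv x = orbit_abs j" "absv x' = orbit_abs j"
  shows "absv (fc x - fc x') = absv (x - x') * expansion j"
proof -
  have x0: "x \<noteq> 0" "x' \<noteq> 0" using assms orbit_abs_bounds[of j] by auto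
  have e: "absv (fc x - fc x') = absv (x - x') * absv (1 - c / (x * x'))"
    using fc_diff[OF x0] by simp
  show ?thesis
  proof (cases "is_return j")
    case True
    then have a: "absv x = absv c" "absv x' = absv c" using assms unfolding orbit_abs_def by auto
    have t: "absv (c / (x * x')) = 1 / absv c" using a c_pos by (simp add: power2_eq_square)
    have "1 < 1 / absv c" using c_pos c_less_1 by simp
    then have "absv (1 - c / (x * x')) = 1 / absv c"
      using absv_diff_eq_right[of 1 "c / (x * x')"] t by simp
    then show ?thesis using e True unfolding expansion_def by simp
  next
    case False
    then have a: "absv x = 1" "absv x' = 1" using assms unfolding orbit_abs_def by auto
    have t: "absv (c / (x * x')) = absv c" using a by simp
    then have "absv (1 - c / (x * x')) = 1"
      using absv_diff_eq_left[of "c / (x * x')" 1] c_less_1 by simp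
    then show ?thesis using e False unfolding expansion_def by simp
  qed
qed

lemma absv_fc_shift_on_level:
  assumes x: "absv x = orbit_abs j"
  shows "absv (fc x - 1 - c) = 1"
proof -
  have "x \<noteq> 0" using x orbit_abs_bounds(1)[of j] by auto
  then have "fc x - 1 - c = x + c / x" using fc_eq by simp
  moreover have "absv (x + c / x) = 1"
  proof (cases "is_return j")
    case True
    then have "absv x = absv c" using x unfolding orbit_abs_def by simp
    then have "absv (c / x) = 1" "absv x < absv (c / x)" using c_pos c_less_1 by simp_all
    then show ?thesis using absv_add_eq_right[of x "c / x"] by simp
  next
    case False
    then have "absv x = 1" using x unfolding orbit_abs_def by simp
    then have "absv (c / x) < absv x" using c_less_1 by simp
    then show ?thesis using absv_add_eq_left[of "c / x" x] \<open>absv x = 1\<close> by simp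
  qed
  ultimately show ?thesis by simp
qed

definition follows_pattern :: "'a \<Rightarrow> nat \<Rightarrow> bool" where
  "follows_pattern z T \<longleftrightarrow> (\<forall>j<T. absv ((fc ^^ j) z) = orbit_abs j)"

lemma follows_pattern_mono: "follows_pattern z T \<Longrightarrow> S \<le> T \<Longrightarrow> follows_pattern z S"
  unfolding follows_pattern_def by auto

lemma follows_pattern_nonzero: assumes "follows_pattern z T" "j < T" shows "(fc ^^ j) z \<noteq> 0"
proof -
  have "absv ((fc ^^ j) z) = orbit_abs j" using assms unfolding follows_pattern_def by simp
  then show ?thesis using orbit_abs_bounds(1)[of j] by auto
qed

lemma follows_pattern_diff: "follows_pattern z T \<Longrightarrow> follows_pattern z' T \<Longrightarrow>
   absv ((fc ^^ T) z - (fc ^^ T) z') = absv (z - z') * orbit_deriv T"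
proof (induction T)
  case (Suc T)
  then have IH: "absv ((fc ^^ T) z - (fc ^^ T) z') = absv (z - z') * orbit_deriv T"
    using follows_pattern_mono[of _ "Suc T" T] by simp
  have "absv ((fc ^^ T) z) = orbit_abs T" "absv ((fc ^^ T) z') = orbit_abs T"
    using Suc.prems unfolding follows_pattern_def by auto
  then have "absv (fc ((fc ^^ T) z) - fc ((fc ^^ T) z'))
      = absv ((fc ^^ T) z - (fc ^^ T) z') * expansion T"
    by (rule fc_diff_on_level)
  then show ?case using IH by (simp add: orbit_deriv_Suc)
qed simp

lemma follows_pattern_near: "follows_pattern z T \<Longrightarrow> absv (z' - z) * orbit_deriv T < absv c \<Longrightarrow>
   follows_pattern z' T \<and> absv ((fc ^^ T) z' - (fc ^^ T) z) = absv (z' - z) * orbit_deriv T"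
proof (induction T)
  case 0 then show ?case unfolding follows_pattern_def by simp
next
  case (Suc T)
  have zT: "follows_pattern z T" using Suc.prems(1) follows_pattern_mono by fastforce
  have "absv (z' - z) * orbit_deriv T \<le> absv (z' - z) * orbit_deriv (Suc T)"
    using orbit_deriv_mono[of T "Suc T"] by (intro mult_left_mono) auto
  then have lt: "absv (z' - z) * orbit_deriv T < absv c" using Suc.prems(2) by linarith
  from Suc.IH[OF zT lt] have
    ih: "follows_pattern z' T" "absv ((fc ^^ T) z' - (fc ^^ T) z) = absv (z' - z) * orbit_deriv T"
    by auto
  have pz: "absv ((fc ^^ T) z) = orbit_abs T"
    using Suc.prems(1) unfolding follows_pattern_def by simp
  have "absv ((fc ^^ T) z' - (fc ^^ T) z) < absv ((fc ^^ T) z)"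
    using ih(2) lt pz orbit_abs_bounds(2)[of T] by linarith
  then have "absv ((fc ^^ T) z + ((fc ^^ T) z' - (fc ^^ T) z)) = absv ((fc ^^ T) z)"
    by (rule absv_add_eq_left)
  then have pz': "absv ((fc ^^ T) z') = orbit_abs T" using pz by simp
  then have f': "follows_pattern z' (Suc T)"
    using ih(1) unfolding follows_pattern_def by (auto simp: less_Suc_eq)
  have "absv (fc ((fc ^^ T) z') - fc ((fc ^^ T) z))
      = absv ((fc ^^ T) z' - (fc ^^ T) z) * expansion T"
    using fc_diff_on_level[OF pz' pz] .
  then show ?case using f' ih(2) by (simp add: orbit_deriv_Suc)
qed

text \<open>On the unit circle f(z) is congruent to z + 1 modulo the maximal ideal, so walking
  backwards from the residue class of -d leads to that of -(d + 1); residue characteristic 0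
  keeps these classes away from the class of 0.\<close>
lemma preimage_on_pattern: assumes "absv (y + of_nat d) < 1"
  shows "\<exists>z. fc z = y \<and> absv z = orbit_abs s \<and> (\<exists>d'. absv (z + of_nat d') < 1)"
proof -
  have "absv (y - 1 - c) = 1"
  proof -
    have eq: "y - 1 - c = (y + of_nat d - c) - of_nat (Suc d)" by (simp add: algebra_simps)
    have l: "absv (y + of_nat d - c) < 1"
      using assms c_less_1 absv_diff_le_max[of "y + of_nat d" c] by simp
    have o: "absv (of_nat (Suc d) :: 'a) = 1" by (rule absv_of_nat) simp
    have "absv ((y + of_nat d - c) - of_nat (Suc d)) = absv (of_nat (Suc d) :: 'a)"
      by (rule absv_diff_eq_right) (use l o in simp)
    then show ?thesis unfolding eq o .
  qed
  then obtain z1 z2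
    where z: "fc z1 = y" "fc z2 = y" "absv z1 = 1" "absv z2 = absv c" "z1 + z2 = y - 1 - c"
    using fc_preimages_split by blast
  show ?thesis
  proof (cases "is_return s")
    case True
    have h: "absv (z2 + of_nat 0) < 1" using z c_less_1 by simp
    have "fc z2 = y \<and> absv z2 = orbit_abs s \<and> (\<exists>d'. absv (z2 + of_nat d') < 1)"
      using z(2,4) True h unfolding orbit_abs_def by (intro conjI exI[of _ 0]) auto
    then show ?thesis by (rule exI)
  next
    case False
    have e: "z1 + of_nat (Suc d) = (y + of_nat d) - c - z2" using z(5) by (simp add: algebra_simps)
    have l: "absv ((y + of_nat d) - c - z2) < 1"
      using assms c_less_1 z(4) absv_diff_le_max[of "y + of_nat d - c" z2]
        absv_diff_le_max[of "y + of_nat d" c]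
        by simp
    have "absv (z1 + of_nat (Suc d)) < 1" unfolding e using l .
    then have "fc z1 = y \<and> absv z1 = orbit_abs s \<and> (\<exists>d'. absv (z1 + of_nat d') < 1)"
      using z(1,3) False unfolding orbit_abs_def by (intro conjI exI[of _ "Suc d"]) auto
    then show ?thesis by (rule exI)
  qed
qed

lemma preimages_on_pattern: "absv (y + of_nat d) < 1 \<Longrightarrow>
  \<exists>z. (\<forall>j<n. absv ((fc ^^ j) z) = orbit_abs (s + j)) \<and> (fc ^^ n) z = y \<and>
    (\<exists>d'. absv (z + of_nat d') < 1)"
proof (induction n arbitrary: s)
  case 0 then show ?case by auto
next
  case (Suc n)
  obtain w where w: "\<forall>j<n. absv ((fc ^^ j) w) = orbit_abs (Suc s + j)" "(fc ^^ n) w = y"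
      "\<exists>d'. absv (w + of_nat d') < 1"
    using Suc.IH[OF Suc.prems] by blast
  obtain d' where d': "absv (w + of_nat d') < 1" using w(3) by blast
  obtain z where z: "fc z = w" "absv z = orbit_abs s" "\<exists>d'. absv (z + of_nat d') < 1"
    using preimage_on_pattern[OF d'] by blast
  have "\<forall>j<Suc n. absv ((fc ^^ j) z) = orbit_abs (s + j)"
  proof (intro allI impI)
    fix j assume "j < Suc n"
    then show "absv ((fc ^^ j) z) = orbit_abs (s + j)"
    proof (cases j)
      case 0 then show ?thesis using z by simp
    next
      case (Suc i)
      then have "(fc ^^ j) z = (fc ^^ i) w"
        using z(1) by (simp add: funpow_Suc_right del: funpow.simps)
      then show ?thesis using w(1) Suc \<open>j < Suc n\<close> by simp
    qed
  qed
  moreover have "(fc ^^ Suc n) z = y"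
    using z(1) w(2) by (simp add: funpow_Suc_right del: funpow.simps)
  ultimately show ?case using z(3) by blast
qed

lemma exists_follows_pattern: "\<exists>z. follows_pattern z T"
proof -
  have "absv (c + of_nat 0) < 1" using c_less_1 by simp
  from preimages_on_pattern[OF this, of T 0] show ?thesis unfolding follows_pattern_def by auto
qed

definition pattern_approx :: "nat \<Rightarrow> 'a" where
  "pattern_approx K = (SOME z. follows_pattern z (Suc K))"

lemma pattern_approx_follows: "follows_pattern (pattern_approx K) (Suc K)"
  unfolding pattern_approx_def by (rule someI_ex[OF exists_follows_pattern])

lemma pattern_approx_close:
  assumes "K \<le> K'"
  shows "absv (pattern_approx K - pattern_approx K') * orbit_deriv K \<le> 1"
proof -
  have f1: "follows_pattern (pattern_approx K) K"
    using follows_pattern_mono[OF pattern_approx_follows[of K]] by simp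
  have f2: "follows_pattern (pattern_approx K') K"
    using follows_pattern_mono[OF pattern_approx_follows[of K']] assms by simp
  have "absv ((fc ^^ K) (pattern_approx K) - (fc ^^ K) (pattern_approx K'))
      = absv (pattern_approx K - pattern_approx K') * orbit_deriv K"
    by (rule follows_pattern_diff[OF f1 f2])
  moreover have "absv ((fc ^^ K) (pattern_approx K)) = orbit_abs K"
    using pattern_approx_follows[of K] unfolding follows_pattern_def by simp
  moreover have "absv ((fc ^^ K) (pattern_approx K')) = orbit_abs K"
    using pattern_approx_follows[of K'] assms unfolding follows_pattern_def by simp
  ultimately show ?thesis
    using absv_diff_le_max[of "(fc ^^ K) (pattern_approx K)" "(fc ^^ K) (pattern_approx K')"]
      orbit_abs_bounds(3)[of K]
    by simp
qed

lemma pattern_approx_dist: "absv (pattern_approx m - pattern_approx n) \<le> 1 / orbit_deriv (min m n)"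
proof -
  have "absv (pattern_approx m - pattern_approx n) \<le> 1 / orbit_deriv m" if "m \<le> n" for m n
    using pattern_approx_close[OF that] orbit_deriv_pos[of m] by (simp add: field_simps)
  then show ?thesis by (metis absv_minus_commute min.absorb1 min.absorb2 nle_le)
qed

lemma pattern_approx_Cauchy: "\<forall>e>0. \<exists>N. \<forall>m\<ge>N. \<forall>n\<ge>N. absv (pattern_approx m - pattern_approx n) < e"
proof (intro allI impI)
  fix e :: real assume "0 < e"
  obtain N where "1 / e < orbit_deriv N" using orbit_deriv_unbounded by blast
  then have N: "1 / orbit_deriv N < e"
    using \<open>0 < e\<close> orbit_deriv_pos[of N] by (simp add: field_simps)
  have "absv (pattern_approx m - pattern_approx n) < e" if "N \<le> m" "N \<le> n" for m n
  proof -
    have "absv (pattern_approx m - pattern_approx n) \<le> 1 / orbit_deriv (min m n)"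
      by (rule pattern_approx_dist)
    also have "\<dots> \<le> 1 / orbit_deriv N"
      using orbit_deriv_mono[of N "min m n"] that orbit_deriv_pos[of N]
        by (intro divide_left_mono) auto
    finally show ?thesis using N by linarith
  qed
  then show "\<exists>N. \<forall>m\<ge>N. \<forall>n\<ge>N. absv (pattern_approx m - pattern_approx n) < e" by blast
qed

lemma exists_pattern_point: "\<exists>b. \<forall>T. follows_pattern b T"
proof -
  obtain L where L: "\<forall>e>0. \<exists>N. \<forall>n\<ge>N. absv (pattern_approx n - L) < e"
    using absv_Cauchy_convergent[OF pattern_approx_Cauchy] by blast
  have "follows_pattern L T" for T
  proof -
    have "0 < absv c / orbit_deriv T" using c_pos orbit_deriv_pos[of T] by simp
    then obtain N where N: "\<forall>n\<ge>N. absv (pattern_approx n - L) < absv c / orbit_deriv T"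
      using L by blast
    define n where "n = max N T"
    have "absv (L - pattern_approx n) < absv c / orbit_deriv T"
      using N unfolding n_def by (simp add: absv_minus_commute)
    then have "absv (L - pattern_approx n) * orbit_deriv T < absv c"
      using orbit_deriv_pos[of T] by (simp add: field_simps)
    moreover have "follows_pattern (pattern_approx n) T"
      using follows_pattern_mono[OF pattern_approx_follows[of n]] unfolding n_def by simp
    ultimately show ?thesis using follows_pattern_near by blast
  qed
  then show ?thesis by blast
qed

lemma chordal_iterate_near_pattern_point:
  assumes b: "\<forall>T. follows_pattern b T" and near: "absv (z - b) * orbit_deriv n < absv c"
  shows "chordal absv ((rat_map Pc Qc ^^ n) (Some b)) ((rat_map Pc Qc ^^ n) (Some z))
           = absv (z - b) * orbit_deriv n"
proof -
  have fz: "follows_pattern z n"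
    and dz: "absv ((fc ^^ n) z - (fc ^^ n) b) = absv (z - b) * orbit_deriv n"
    using follows_pattern_near[OF b[rule_format, of n] near] by auto
  have fb: "absv ((fc ^^ n) b) = orbit_abs n" using b unfolding follows_pattern_def by blast
  then have "absv ((fc ^^ n) z - (fc ^^ n) b) < absv ((fc ^^ n) b)"
    using dz near orbit_abs_bounds(2)[of n] by linarith
  then have "absv ((fc ^^ n) z) = orbit_abs n"
    using absv_add_eq_left[of "(fc ^^ n) z - (fc ^^ n) b" "(fc ^^ n) b"] fb by simp
  moreover have "(rat_map Pc Qc ^^ n) (Some z) = Some ((fc ^^ n) z)"
    using rat_map_iter follows_pattern_nonzero[OF fz] by blast
  moreover have "(rat_map Pc Qc ^^ n) (Some b) = Some ((fc ^^ n) b)"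
    using rat_map_iter follows_pattern_nonzero[OF b[rule_format, of n]] by blast
  ultimately show ?thesis using dz fb orbit_abs_bounds(3)[of n]
    by (simp add: chordal_Some_Some_le_1 absv_minus_commute)
qed

lemma sph_deriv_pattern_point:
  assumes b: "\<forall>T. follows_pattern b T"
  shows "sph_deriv absv (rat_map Pc Qc ^^ n) (Some b) = orbit_deriv n"
proof -
  let ?g = "rat_map Pc Qc ^^ n"
  define e where "e = absv c / orbit_deriv n"
  have "0 < e" unfolding e_def using c_pos orbit_deriv_pos[of n] by simp
  have "e \<le> absv c" unfolding e_def using c_pos orbit_deriv_ge_1[of n] by (simp add: divide_le_eq)
  have "follows_pattern b 1" using b by blast
  then have "absv b = absv c" using is_return_0 unfolding follows_pattern_def orbit_abs_def by simp
  have "chordal absv (?g (Some b)) (?g y) / chordal absv (Some b) y = orbit_deriv n"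
    if y: "y \<noteq> Some b" "chordal absv (Some b) y < e" for y
  proof -
    have "absv b \<le> 1" "chordal absv (Some b) y < 1"
      using \<open>absv b = absv c\<close> c_less_1 y(2) \<open>e \<le> absv c\<close> by linarith+
    then obtain z where z: "y = Some z" "chordal absv (Some b) y = absv (z - b)"
      by (rule chordal_Some_less_1)
    then have "absv (z - b) * orbit_deriv n < absv c"
      using y(2) orbit_deriv_pos[of n] unfolding e_def by (simp add: field_simps)
    then show ?thesis using chordal_iterate_near_pattern_point[OF b] z y(1) by simp
  qed
  then have "eventually
      (\<lambda>y. chordal absv (?g (Some b)) (?g y) / chordal absv (Some b) y = orbit_deriv n)
      (chordal_at absv (Some b))"
    unfolding eventually_chordal_at using \<open>0 < e\<close> by blast
  then have "((\<lambda>y. chordal absv (?g (Some b)) (?g y) / chordal absv (Some b) y) \<longlongrightarrow> orbit_deriv n)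
      (chordal_at absv (Some b))"
    by (rule tendsto_eventually)
  then show ?thesis unfolding sph_deriv_def by (rule tendsto_Lim[OF chordal_at_Some_nontrivial])
qed

text \<open>Of the two preimages of y, the one on the same circle as x is as close to x as the
  expansion factor predicts.\<close>
lemma fc_preimage_near:
  assumes x: "absv x = orbit_abs j" and r: "0 \<le> \<rho>" "\<rho> < orbit_abs j"
    and y: "absv (y - fc x) \<le> \<rho> * expansion j"
  shows "\<exists>z. absv (z - x) \<le> \<rho> \<and> fc z = y \<and> z \<noteq> 0"
proof -
  have x0: "x \<noteq> 0" using x orbit_abs_bounds(1)[of j] by auto
  have A: "absv (fc x - 1 - c) = 1" by (rule absv_fc_shift_on_level[OF x])
  have B: "absv (y - fc x) < 1"
  proof -
    have "\<rho> * expansion j < orbit_abs j * expansion j"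
      using r expansion_pos[of j] by (intro mult_strict_right_mono) auto
    then show ?thesis using y orbit_abs_expansion[of j] by linarith
  qed
  have eqy: "y - 1 - c = (fc x - 1 - c) + (y - fc x)" by simp
  have "absv ((fc x - 1 - c) + (y - fc x)) = absv (fc x - 1 - c)"
    by (rule absv_add_eq_left) (use A B in simp)
  then have yc: "absv (y - 1 - c) = 1" unfolding eqy[symmetric] using A by simp
  obtain z1 z2 where z: "fc z1 = y" "fc z2 = y" "absv z1 = 1" "absv z2 = absv c"
      "z1 + z2 = y - 1 - c" "z1 \<noteq> 0" "z2 \<noteq> 0" "z1 * z2 = c"
    using fc_preimages_split[OF yc] by blast
  have key: "(x - z1) * (x - z2) = x * (fc x - y)" using fc_preimages_factor x0 z(5,8) by blast
  have prod: "absv (x - z1) * absv (x - z2) \<le> \<rho>"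
  proof -
    have "absv (x - z1) * absv (x - z2) = absv x * absv (fc x - y)" using key by (metis absv_mult)
    also have "\<dots> = orbit_abs j * absv (y - fc x)" using x absv_minus_commute by simp
    also have "\<dots> \<le> orbit_abs j * (\<rho> * expansion j)"
      using y orbit_abs_bounds(1)[of j] by (intro mult_left_mono) auto
    also have "\<dots> = \<rho>" using orbit_abs_expansion[of j] by (simp add: algebra_simps)
    finally show ?thesis .
  qed
  show ?thesis
  proof (cases "is_return j")
    case True
    then have ax: "absv x = absv c" using x unfolding orbit_abs_def by simp
    have "absv (x - z1) = 1" using absv_diff_eq_right[of x z1] ax c_less_1 z(3) by simp
    then have "absv (z2 - x) \<le> \<rho>" using prod absv_minus_commute[of z2 x] by simp
    then show ?thesis using z by blast
  next
    case False
    then have ax: "absv x = 1" using x unfolding orbit_abs_def by simp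
    have "absv (x - z2) = 1" using absv_diff_eq_left[of z2 x] ax c_less_1 z(4) by simp
    then have "absv (z1 - x) \<le> \<rho>" using prod absv_minus_commute[of z1 x] by simp
    then show ?thesis using z by blast
  qed
qed

lemma iterate_preimage_near_pattern_point: assumes b: "\<forall>T. follows_pattern b T" and r: "0 < r"
  shows "(\<forall>i<n. r * orbit_deriv i < orbit_abs i) \<Longrightarrow> absv (y - (fc ^^ n) b) \<le> r * orbit_deriv n \<Longrightarrow>
    \<exists>z. absv (z - b) \<le> r \<and> (\<forall>j<n. (fc ^^ j) z \<noteq> 0) \<and> (fc ^^ n) z = y"
proof (induction n arbitrary: y)
  case 0 then show ?case by auto
next
  case (Suc n)
  define x where "x = (fc ^^ n) b"
  have "follows_pattern b (Suc n)" using b by simp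
  then have x: "absv x = orbit_abs n" unfolding follows_pattern_def x_def by simp
  have rho: "0 \<le> r * orbit_deriv n" "r * orbit_deriv n < orbit_abs n"
    using r orbit_deriv_pos[of n] Suc.prems(1) by auto
  have "absv (y - fc x) \<le> r * orbit_deriv n * expansion n"
    using Suc.prems(2) unfolding x_def by (simp add: orbit_deriv_Suc)
  from fc_preimage_near[OF x rho this]
  obtain z' where z': "absv (z' - x) \<le> r * orbit_deriv n" "fc z' = y" "z' \<noteq> 0"
    by blast
  have "\<forall>i<n. r * orbit_deriv i < orbit_abs i" using Suc.prems(1) by simp
  from Suc.IH[OF this] z'(1)
  obtain z where z: "absv (z - b) \<le> r" "\<forall>j<n. (fc ^^ j) z \<noteq> 0" "(fc ^^ n) z = z'"
    unfolding x_def by blast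
  have "\<forall>j<Suc n. (fc ^^ j) z \<noteq> 0" using z(2,3) z'(3) by (auto simp: less_Suc_eq)
  moreover have "(fc ^^ Suc n) z = y" using z(3) z'(2) by simp
  ultimately show ?case using z(1) by blast
qed

text \<open>The first return time at which the disk of radius r around b has grown to radius |c|;
  before it, the images of that disk stay on the circles of the pattern.\<close>
lemma exists_first_large_return: assumes r: "0 < r"
  shows "\<exists>M. is_return M \<and> absv c \<le> r * orbit_deriv M \<and> (\<forall>i<M. r * orbit_deriv i < orbit_abs i)"
proof -
  define Pm where "Pm m = (is_return m \<and> absv c \<le> r * orbit_deriv m)" for m
  obtain n0 where n0: "absv c / r < orbit_deriv n0" using orbit_deriv_unbounded by blast
  obtain m where m: "m > n0" "is_return m" using exists_return_after by blast
  have "orbit_deriv n0 \<le> orbit_deriv m" using m by (intro orbit_deriv_mono) simp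
  then have "r * orbit_deriv n0 \<le> r * orbit_deriv m" using r by simp
  moreover have "absv c < r * orbit_deriv n0" using n0 r by (simp add: field_simps)
  ultimately have "absv c \<le> r * orbit_deriv m" by linarith
  then have ex: "\<exists>m. Pm m" using m unfolding Pm_def by blast
  define M where "M = (LEAST m. Pm m)"
  have PM: "Pm M" unfolding M_def by (rule LeastI_ex[OF ex])
  have lt: "\<not> Pm i" if "i < M" for i unfolding M_def using not_less_Least that M_def by blast
  have "\<forall>i<M. r * orbit_deriv i < orbit_abs i"
  proof (intro allI impI)
    fix i assume i: "i < M"
    show "r * orbit_deriv i < orbit_abs i"
    proof (cases "is_return i")
      case True then show ?thesis using lt[OF i] unfolding Pm_def orbit_abs_def by auto
    next
      case False
      then obtain p where p: "p < i" "is_return p" "orbit_deriv i = orbit_deriv p / absv c"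
        using orbit_deriv_nonreturn by blast
      have "r * orbit_deriv p < absv c" using lt[of p] p i unfolding Pm_def by auto
      have e: "r * orbit_deriv i = (r * orbit_deriv p) / absv c" using p(3) by simp
      have "(r * orbit_deriv p) / absv c < 1"
        using \<open>r * orbit_deriv p < absv c\<close> c_pos by (simp add: divide_less_eq)
      then have "r * orbit_deriv i < 1" using e by simp
      then show ?thesis using False unfolding orbit_abs_def by simp
    qed
  qed
  then show ?thesis using PM unfolding Pm_def by blast
qed

lemma berk_disk_iterate_reaches_small_disk:
  assumes b: "\<forall>T. follows_pattern b T" and "0 < r"
  obtains M where "\<And>z. absv z \<le> absv c \<Longrightarrow>
    \<exists>x. absv (x - b) \<le> r \<and> (berk_map absv Pc Qc ^^ M) (Some (typeI absv x)) = Some (typeI absv z)"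
proof -
  obtain M
    where M: "is_return M" "absv c \<le> r * orbit_deriv M" "\<forall>i<M. r * orbit_deriv i < orbit_abs i"
    using exists_first_large_return[OF \<open>0 < r\<close>] by blast
  have "follows_pattern b (Suc M)" using b by blast
  then have "absv ((fc ^^ M) b) = absv c"
    using M(1) unfolding follows_pattern_def orbit_abs_def by simp
  have "\<exists>x. absv (x - b) \<le> r \<and>
      (berk_map absv Pc Qc ^^ M) (Some (typeI absv x)) = Some (typeI absv z)"
    if "absv z \<le> absv c" for z
  proof -
    have "absv (z - (fc ^^ M) b) \<le> r * orbit_deriv M"
      using absv_diff_le_max[of z "(fc ^^ M) b"] that M(2) \<open>absv ((fc ^^ M) b) = absv c\<close> by simp
    then obtain x where "absv (x - b) \<le> r" "\<forall>j<M. (fc ^^ j) x \<noteq> 0" "(fc ^^ M) x = z"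
      using iterate_preimage_near_pattern_point[OF b \<open>0 < r\<close> M(3)] by blast
    then show ?thesis using berk_map_iter by blast
  qed
  then show ?thesis using that by blast
qed

text \<open>The image of the compact disk is closed, and it contains infinity and the dense set of
  type I points.\<close>
lemma berk_disk_iterate_covers:
  assumes b: "\<forall>T. follows_pattern b T" and "0 < r"
  shows "\<exists>M\<ge>1. berkP1 absv \<subseteq> (berk_map absv Pc Qc ^^ M) ` Some ` berk_disk b r"
proof -
  obtain M where M: "\<And>z. absv z \<le> absv c \<Longrightarrow>
      \<exists>x. absv (x - b) \<le> r \<and> (berk_map absv Pc Qc ^^ M) (Some (typeI absv x)) = Some (typeI absv z)"
    using berk_disk_iterate_reaches_small_disk[OF assms] by blast
  let ?F = "berk_map absv Pc Qc ^^ (3 + M)"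
  have covers: "y \<in> ?F ` Some ` berk_disk b r"
    if y: "y = None \<or> (\<exists>w. y = Some (typeI absv w))" for y
  proof -
    obtain z where z: "absv z \<le> absv c" "(berk_map absv Pc Qc ^^ 3) (Some (typeI absv z)) = y"
      using berk_map_iterate_small_disk_covers[OF y] by blast
    obtain x where "absv (x - b) \<le> r"
      "(berk_map absv Pc Qc ^^ M) (Some (typeI absv x)) = Some (typeI absv z)"
      using M[OF z(1)] by blast
    moreover have "?F (Some (typeI absv x)) =
        (berk_map absv Pc Qc ^^ 3) ((berk_map absv Pc Qc ^^ M) (Some (typeI absv x)))"
      by (simp add: funpow_add)
    ultimately show ?thesis using z(2) typeI_in_berk_disk_iff[of x b r] by (metis image_eqI)
  qed
  have "compactin berkP1_top (?F ` Some ` berk_disk b r)"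
    by (intro image_compactin[OF image_compactin[OF compactin_berk_disk continuous_map_Some]]
        continuous_map_berk_map_iterate)
  then have "closedin berkP1_top (?F ` Some ` berk_disk b r)"
    by (rule compactin_imp_closedin[OF Hausdorff_berkP1_top])
  then have "berkP1 absv \<subseteq> ?F ` Some ` berk_disk b r"
    by (rule berkP1_subset_closedin) (use covers in auto)
  then show ?thesis by (intro exI[of _ "3 + M"]) simp
qed

lemma pattern_point_in_berk_julia:
  assumes b: "\<forall>T. follows_pattern b T"
  shows "Some (typeI absv b) \<in> berk_julia absv Pc Qc"
proof (rule in_berk_julia_if_iterates_cover)
  show "Some (typeI absv b) \<in> berkP1 absv" unfolding berkP1_def using typeI_in_berkA1 by auto
  fix V assume V: "berkP1_open absv V" "Some (typeI absv b) \<in> V"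
  then have "openin (berkA1_top absv) (Some -` V)" unfolding berkP1_open_def by auto
  then have "eventually (\<lambda>r. berk_disk b r \<subseteq> Some -` V) (at_right 0)"
    using V(2) by (intro eventually_berk_disk_subset) auto
  then obtain d where "0 < d" "\<And>r. 0 < r \<Longrightarrow> r < d \<Longrightarrow> berk_disk b r \<subseteq> Some -` V"
    unfolding eventually_at_right_field by blast
  then have "0 < d / 2" "berk_disk b (d / 2) \<subseteq> Some -` V" by simp_all
  then obtain r where "0 < r" "berk_disk b r \<subseteq> Some -` V" by blast
  then have "Some ` berk_disk b r \<subseteq> V" by auto
  obtain n where "1 \<le> n" "berkP1 absv \<subseteq> (berk_map absv Pc Qc ^^ n) ` Some ` berk_disk b r"
    using berk_disk_iterate_covers[OF b \<open>0 < r\<close>] by blast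
  moreover have
    "(berk_map absv Pc Qc ^^ n) ` Some ` berk_disk b r \<subseteq> (berk_map absv Pc Qc ^^ n) ` V"
    using \<open>Some ` berk_disk b r \<subseteq> V\<close> by (rule image_mono)
  ultimately show "\<exists>n\<ge>1. berkP1 absv \<subseteq> (berk_map absv Pc Qc ^^ n) ` V" by blast
qed

end

theorem mainTheorem17:
  fixes absv :: "'a::field_char_0 \<Rightarrow> real" and c :: 'a
  assumes "Cv_field absv"
    and "residue_char_zero absv"
    and "0 < absv c" and "absv c < 1"
  defines "P \<equiv> [:c, 1 + c, 1:]" and "Q \<equiv> [:0, 1:]"
  shows "\<exists>b::'a. Some (typeI absv b) \<in> berk_julia absv P Q \<and>
           (\<forall>n::nat. 1 \<le> n \<longrightarrow>
              sph_deriv absv (rat_map P Q ^^ n) (Some b) \<le> (1 / absv c) * real n)"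
proof -
  interpret julia_example absv c
    using assms(1-4) by unfold_locales (simp_all add: Cv_field_def)
  obtain b where b: "\<forall>T. follows_pattern b T" using exists_pattern_point by blast
  have "sph_deriv absv (rat_map P Q ^^ n) (Some b) \<le> (1 / absv c) * real n" if "1 \<le> n" for n
    using sph_deriv_pattern_point[OF b, of n] orbit_deriv_le[OF that] unfolding P_def Q_def by simp
  then show ?thesis using pattern_point_in_berk_julia[OF b] unfolding P_def Q_def by blast
qed

end
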